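(* Let $k\ge1$. The holonomy translation $\tau\in\mathbb C/Z_k$ of a regular $\frac1k$-translation end of degree $d$ satisfies: $\tau=0$ unless $d\in\{-k,-2k,-3k,\dots\}$, and $\tau\neq0$ if $d=-k$. Conversely, for every $d\in\mathbb Z$ and $\tau\in\mathbb C/Z_k$ satisfying these restrictions, there exists, unique up to equivalence, a regular $\frac1k$-translation end of degree $d$ with holonomy translation $\tau$.
   Context: $Z_k=\{e^{2\pi i m/k}:m\in\mathbb Z\}$ and $\mathrm{Aut}(\mathbb C,dz^k)=\{z\mapsto \zeta z+b:\zeta\in Z_k,b\in\mathbb C\}$. A $\frac1k$-translation surface is a surface with an atlas of charts to $\mathbb C$ with transition maps in $\mathrm{Aut}(\mathbb C,dz^k)$ (equivalently, a Riemann surface with a nowhere vanishing holomorphic $k$-differential, locally $dz^k$). A $\frac1k$-translation end is such a surface homeomorphic to $\mathbb S^1\times[0,1)$; two are equivalent if they become isomorphic after removing a compact subset from each. It is regular, of degree $d\in\mathbb Z$, if it is (up to equivalence) a punctured disk $\{0<|z|\le1\}$ with a nowhere vanishing holomorphic $k$-differential $\phi(z)dz^k$ where $\phi(z)=z^df(z)$, $f$ holomorphic at $0$ with $f(0)\ne0$. For $\sigma(z)=\zeta z+b$, set $\mathrm{tran}_k(\sigma)=0\in\mathbb C/Z_k$ if $\zeta\ne1$ and $\mathrm{tran}_k(\sigma)=[b]\in\mathbb C/Z_k$ if $\zeta=1$ (a conjugacy invariant). The holonomy translation $\tau(F)$ of an end $F$ is $\mathrm{tran}_k$ of the holonomy of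 $F$ along the generator of $\pi_1(F)$ carried by the oriented boundary $\partial F$. *)

theory Defs
  imports "HOL-Analysis.Analysis"
begin

text \<open>Elements of C/Z_k are represented as Z_k-orbits (subsets of the complex plane).\<close>

definition Zk_class :: "nat \<Rightarrow> complex \<Rightarrow> complex set" where
  "Zk_class k b = {exp (2 * of_real pi * \<i> * of_int m / of_nat k) * b | m :: int. True}"

definition tran_k :: "nat \<Rightarrow> complex \<Rightarrow> complex \<Rightarrow> complex set" where
  "tran_k k \<zeta> b = (if \<zeta> = 1 then Zk_class k b else Zk_class k 0)"

text \<open>A regular end of degree d, modelled (up to equivalence) as the punctured disk
  0 < |z| < r with the k-differential phi(z) dz^k, phi(z) = z^d f(z), f holomorphic on the
  disk and nonvanishing (so phi is nowhere vanishing on the punctured disk and f(0) \<noteq> 0).\<close>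

definition regular_end :: "int \<Rightarrow> real \<Rightarrow> (complex \<Rightarrow> complex) \<Rightarrow> bool" where
  "regular_end d r \<phi> \<longleftrightarrow> 0 < r \<and>
     (\<exists>f. f holomorphic_on ball 0 r \<and> (\<forall>z\<in>ball 0 r. f z \<noteq> 0) \<and>
          (\<forall>z\<in>ball 0 r - {0}. \<phi> z = z powi d * f z))"

text \<open>Universal cover of the punctured disk: the half plane Re s < ln r, z = exp s.
  A developing map D satisfies (dD)^k = phi(e^s) (e^s ds)^k; the deck transformation
  s \<mapsto> s + 2 pi i corresponds to the counterclockwise loop, i.e. the oriented boundary.\<close>

definition cover_hp :: "real \<Rightarrow> complex set" where
  "cover_hp r = {s. Re s < ln r}"

definition developing_map :: "nat \<Rightarrow> real \<Rightarrow> (complex \<Rightarrow> complex) \<Rightarrow> (complex \<Rightarrow> complex) \<Rightarrow> bool" where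
  "developing_map k r \<phi> D \<longleftrightarrow> D holomorphic_on cover_hp r \<and>
     (\<forall>s\<in>cover_hp r. (deriv D s) ^ k = \<phi> (exp s) * exp (of_nat k * s))"

definition has_hol_transl :: "nat \<Rightarrow> real \<Rightarrow> (complex \<Rightarrow> complex) \<Rightarrow> complex set \<Rightarrow> bool" where
  "has_hol_transl k r \<phi> \<tau> \<longleftrightarrow>
     (\<exists>D \<zeta> b. developing_map k r \<phi> D \<and> \<zeta> ^ k = 1 \<and>
        (\<forall>s\<in>cover_hp r. D (s + 2 * of_real pi * \<i>) = \<zeta> * D s + b) \<and>
        \<tau> = tran_k k \<zeta> b)"

definition hol_transl :: "nat \<Rightarrow> real \<Rightarrow> (complex \<Rightarrow> complex) \<Rightarrow> complex set" where
  "hol_transl k r \<phi> = (THE \<tau>. has_hol_transl k r \<phi> \<tau>)"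

text \<open>Equivalence of ends: an isomorphism of 1/k-translation structures between punctured
  neighbourhoods of the punctures (it extends holomorphically and injectively over 0).\<close>

definition ends_equiv :: "nat \<Rightarrow> real \<Rightarrow> (complex \<Rightarrow> complex) \<Rightarrow> real \<Rightarrow> (complex \<Rightarrow> complex) \<Rightarrow> bool" where
  "ends_equiv k r1 \<phi>1 r2 \<phi>2 \<longleftrightarrow>
     (\<exists>\<epsilon> h. 0 < \<epsilon> \<and> \<epsilon> \<le> r1 \<and> h holomorphic_on ball 0 \<epsilon> \<and> inj_on h (ball 0 \<epsilon>) \<and>
        h 0 = 0 \<and> h ` ball 0 \<epsilon> \<subseteq> ball 0 r2 \<and>
        (\<forall>z\<in>ball 0 \<epsilon> - {0}. \<phi>2 (h z) * (deriv h z) ^ k = \<phi>1 z))"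

end

theory Submission
  imports Defs "HOL-Complex_Analysis.Complex_Analysis"
begin

(*
  A regular end is \<phi> = z^d g(z)^k with g holomorphic and non-vanishing near 0.  On the half
  plane Re s < ln r covering the punctured disk, a developing map is a primitive D of
  exp(\<alpha> s) g(e^s) with k \<alpha> = d + k, and D(s + 2\<pi>i) = e^(2\<pi>i\<alpha>) D(s) + b.  If k does not
  divide d the rotation e^(2\<pi>i\<alpha>) is nontrivial; if d = e k with e \<ge> 0 the primitive is
  2\<pi>i-periodic; if d = -(m+1) k the translation is 2\<pi>i times the m-th Taylor coefficient of g,
  which for m = 0 is g(0) \<noteq> 0.  Conversely z^d, z^(-k) c^k and z^(-(m+1)k) (1 + c z^m)^k realise
  every admissible translation.

  For uniqueness, every end admits a chart N at the puncture with N'(0) \<noteq> 0 pulling back a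
  normal form that depends only on d and the translation: w^d dw^k if d is not in -k\<nat>\<^sub>+
  (an Euler equation a H + z H' = a g solved by power series), and (w^(-m-1) + c/w)^k dw^k,
  resp. (c/w)^k dw^k for m = 0, if d = -(m+1) k (an implicit equation solved by a
  contraction).  The transition map between two such charts is the required equivalence.
*)

section \<open>Holonomy translations\<close>

lemma exp_2pi_int: "exp (2 * of_real pi * \<i> * of_int m) = 1"
  using exp_integer_2pi[of "of_int m"] by (simp add: mult_ac)

lemma root_unity_exp_pow:
  assumes "k \<ge> 1"
  shows "exp (2 * of_real pi * \<i> * of_int m / of_nat k) ^ k = 1"
proof -
  have "exp (2 * of_real pi * \<i> * of_int m / of_nat k) ^ k
        = exp (of_nat k * (2 * of_real pi * \<i> * of_int m / of_nat k))"
    by (rule exp_of_nat_mult[symmetric])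
  also have "of_nat k * (2 * of_real pi * \<i> * of_int m / of_nat k) = 2 * of_real pi * \<i> * of_int m"
    using assms by simp
  finally show ?thesis
    by (simp only: exp_2pi_int)
qed

lemma Zk_class_conv_roots_unity:
  assumes "k \<ge> 1"
  shows "Zk_class k b = {\<eta> * b | \<eta>. \<eta> ^ k = 1}"
proof (intro equalityI subsetI)
  fix x assume "x \<in> Zk_class k b"
  then obtain m where "x = exp (2 * of_real pi * \<i> * of_int m / of_nat k) * b"
    unfolding Zk_class_def by blast
  then show "x \<in> {\<eta> * b | \<eta>. \<eta> ^ k = 1}"
    using root_unity_exp_pow[OF assms] by blast
next
  fix x assume "x \<in> {\<eta> * b | \<eta>. \<eta> ^ k = 1}"
  then obtain \<eta> where "\<eta> ^ k = 1" "x = \<eta> * b"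
    by blast
  moreover obtain j :: nat where "\<eta> = exp (2 * of_real pi * \<i> * of_nat j / of_nat k)"
    using \<open>\<eta> ^ k = 1\<close> complex_roots_unity[OF assms] by blast
  ultimately have "x = exp (2 * of_real pi * \<i> * of_int (int j) / of_nat k) * b"
    by simp
  then show "x \<in> Zk_class k b"
    unfolding Zk_class_def by blast
qed

lemma Zk_class_self: "b \<in> Zk_class k b"
  unfolding Zk_class_def by (auto intro!: exI[of _ 0])

lemma Zk_class_0: "Zk_class k 0 = {0}"
  unfolding Zk_class_def by auto

lemma Zk_class_eq_0_iff: "Zk_class k b = Zk_class k 0 \<longleftrightarrow> b = 0"
  using Zk_class_self[of b k] by (auto simp: Zk_class_0)

lemma Zk_class_mult_root_unity:
  assumes "k \<ge> 1" "\<eta> ^ k = 1"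
  shows "Zk_class k (\<eta> * b) = Zk_class k b"
proof -
  have "\<eta> \<noteq> 0"
    using assms by (metis not_one_le_zero power_0_left zero_neq_one)
  have "{\<mu> * (\<eta> * b) | \<mu>. \<mu> ^ k = 1} = {\<theta> * b | \<theta>. \<theta> ^ k = 1}"
  proof (intro equalityI subsetI)
    fix x assume "x \<in> {\<mu> * (\<eta> * b) | \<mu>. \<mu> ^ k = 1}"
    then obtain \<mu> where "\<mu> ^ k = 1" "x = \<mu> * (\<eta> * b)"
      by blast
    then show "x \<in> {\<theta> * b | \<theta>. \<theta> ^ k = 1}"
      using assms by (intro CollectI exI[of _ "\<mu> * \<eta>"]) (simp add: power_mult_distrib)
  next
    fix x assume "x \<in> {\<theta> * b | \<theta>. \<theta> ^ k = 1}"
    then obtain \<theta> where "\<theta> ^ k = 1" "x = \<theta> * b"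
      by blast
    then show "x \<in> {\<mu> * (\<eta> * b) | \<mu>. \<mu> ^ k = 1}"
      using assms \<open>\<eta> \<noteq> 0\<close> by (intro CollectI exI[of _ "\<theta> / \<eta>"]) (simp add: power_divide)
  qed
  then show ?thesis
    unfolding Zk_class_conv_roots_unity[OF assms(1)] .
qed

lemma Zk_class_eqD:
  assumes "k \<ge> 1" "Zk_class k b = Zk_class k b'"
  obtains \<eta> where "\<eta> ^ k = 1" "b' = \<eta> * b"
proof -
  have "b' \<in> {\<eta> * b | \<eta>. \<eta> ^ k = 1}"
    using Zk_class_self[of b' k] assms unfolding Zk_class_conv_roots_unity[OF assms(1)] by simp
  then show ?thesis
    using that by blast
qed

lemma open_cover_hp: "open (cover_hp r)"
  unfolding cover_hp_def by (rule open_halfspace_Re_lt)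

lemma convex_cover_hp: "convex (cover_hp r)"
  unfolding cover_hp_def by (rule convex_halfspace_Re_lt)

lemma ln_minus_1_in_cover_hp: "of_real (ln r - 1) \<in> cover_hp r"
  unfolding cover_hp_def by simp

lemma cover_hp_add_2pi: "s \<in> cover_hp r \<Longrightarrow> s + 2 * of_real pi * \<i> \<in> cover_hp r"
  unfolding cover_hp_def by simp

lemma exp_cover_hp: "0 < r \<Longrightarrow> s \<in> cover_hp r \<Longrightarrow> exp s \<in> ball 0 r - {0}"
  unfolding cover_hp_def by (auto simp: dist_norm) (metis exp_less_cancel_iff exp_ln)

lemma developing_map_deriv_nonzero:
  assumes "developing_map k r \<phi> D" "k \<ge> 1" "s \<in> cover_hp r" "\<phi> (exp s) \<noteq> 0"
  shows "deriv D s \<noteq> 0"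
  using assms unfolding developing_map_def
  by (metis exp_not_eq_zero mult_eq_0_iff not_one_le_zero power_0_left)

lemma developing_maps_affine:
  assumes k: "k \<ge> 1" and nz: "\<forall>s\<in>cover_hp r. \<phi> (exp s) \<noteq> 0"
    and D1: "developing_map k r \<phi> D1" and D2: "developing_map k r \<phi> D2"
  obtains c e where "c ^ k = 1" "\<And>s. s \<in> cover_hp r \<Longrightarrow> D2 s = c * D1 s + e"
proof -
  let ?H = "cover_hp r"
  have hol1: "D1 holomorphic_on ?H" and hol2: "D2 holomorphic_on ?H"
    using D1 D2 unfolding developing_map_def by auto
  have nz1: "deriv D1 s \<noteq> 0" if "s \<in> ?H" for s
    using developing_map_deriv_nonzero[OF D1 k that] nz that by blast
  define q where "q s = deriv D2 s / deriv D1 s" for s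
  have qk: "q s ^ k = 1" if "s \<in> ?H" for s
    using D1 D2 that nz1[OF that] nz unfolding developing_map_def q_def
    by (simp add: power_divide)
  have "q holomorphic_on ?H"
    unfolding q_def using hol1 hol2 open_cover_hp nz1
    by (intro holomorphic_intros holomorphic_deriv) auto
  moreover have "finite (q ` ?H)"
    by (rule finite_subset[OF _ finite_roots_unity[of k]]) (use qk k in auto)
  ultimately have "q constant_on ?H"
    using continuous_finite_range_constant holomorphic_on_imp_continuous_on
      convex_connected[OF convex_cover_hp] by blast
  then obtain c where c: "\<And>s. s \<in> ?H \<Longrightarrow> q s = c"
    unfolding constant_on_def by metis
  have "c ^ k = 1"
    using qk c ln_minus_1_in_cover_hp by metis
  have "\<exists>e. \<forall>s\<in>?H. D2 s - c * D1 s = e"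
  proof (rule has_field_derivative_zero_constant[OF convex_cover_hp])
    fix s assume s: "s \<in> ?H"
    have "((\<lambda>s. D2 s - c * D1 s) has_field_derivative deriv D2 s - c * deriv D1 s) (at s)"
      using s hol1 hol2 open_cover_hp
      by (intro derivative_intros DERIV_cmult holomorphic_derivI) auto
    moreover have "deriv D2 s - c * deriv D1 s = 0"
      using c[OF s] nz1[OF s] unfolding q_def by (simp add: field_simps)
    ultimately show "((\<lambda>s. D2 s - c * D1 s) has_field_derivative 0) (at s within ?H)"
      by (simp add: has_field_derivative_at_within)
  qed
  then show ?thesis
    using that \<open>c ^ k = 1\<close> by (metis diff_eq_eq add.commute)
qed

lemma deriv_nonzero_imp_nonconstant_on_open:
  assumes "open S" "s0 \<in> S" "deriv D s0 \<noteq> 0"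
  shows "\<not> (\<forall>s\<in>S. D s = K)"
proof
  assume "\<forall>s\<in>S. D s = K"
  then have "(D has_field_derivative 0) (at s0)"
    using has_field_derivative_transform_within_open[OF DERIV_const assms(1,2)] by auto
  then show False
    using assms(3) DERIV_imp_deriv by blast
qed

lemma has_hol_transl_unique:
  assumes k: "k \<ge> 1" and nz: "\<forall>s\<in>cover_hp r. \<phi> (exp s) \<noteq> 0"
    and h1: "has_hol_transl k r \<phi> \<tau>1" and h2: "has_hol_transl k r \<phi> \<tau>2"
  shows "\<tau>1 = \<tau>2"
proof -
  let ?H = "cover_hp r" and ?w = "2 * of_real pi * \<i>"
  obtain D1 \<zeta>1 b1 where D1: "developing_map k r \<phi> D1" "\<forall>s\<in>?H. D1 (s + ?w) = \<zeta>1 * D1 s + b1"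
    and \<tau>1: "\<tau>1 = tran_k k \<zeta>1 b1"
    using h1 unfolding has_hol_transl_def by blast
  obtain D2 \<zeta>2 b2 where D2: "developing_map k r \<phi> D2" "\<forall>s\<in>?H. D2 (s + ?w) = \<zeta>2 * D2 s + b2"
    and \<tau>2: "\<tau>2 = tran_k k \<zeta>2 b2"
    using h2 unfolding has_hol_transl_def by blast
  obtain c e where c: "c ^ k = 1" and e: "\<And>s. s \<in> ?H \<Longrightarrow> D2 s = c * D1 s + e"
    using developing_maps_affine[OF k nz D1(1) D2(1)] by blast
  have c0: "c \<noteq> 0"
    using c k by (metis not_one_le_zero power_0_left zero_neq_one)
  have affine: "(\<zeta>1 - \<zeta>2) * c * D1 s = \<zeta>2 * e + b2 - c * b1 - e" if s: "s \<in> ?H" for s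
  proof -
    have "\<zeta>2 * (c * D1 s + e) + b2 = c * (\<zeta>1 * D1 s + b1) + e"
      using D1(2) D2(2) e[OF s] e[OF cover_hp_add_2pi[OF s]] s by auto
    then show ?thesis
      by (simp add: algebra_simps)
  qed
  have "\<zeta>1 = \<zeta>2"
  proof (rule ccontr)
    assume ne: "\<zeta>1 \<noteq> \<zeta>2"
    define K where "K = (\<zeta>2 * e + b2 - c * b1 - e) / ((\<zeta>1 - \<zeta>2) * c)"
    have "\<forall>s\<in>?H. D1 s = K"
      using affine ne c0 unfolding K_def by (simp add: field_simps)
    then show False
      using deriv_nonzero_imp_nonconstant_on_open[OF open_cover_hp ln_minus_1_in_cover_hp]
        developing_map_deriv_nonzero[OF D1(1) k ln_minus_1_in_cover_hp] nz ln_minus_1_in_cover_hp by blast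
  qed
  show ?thesis
  proof (cases "\<zeta>1 = 1")
    case True
    then have "b2 = c * b1"
      using affine[OF ln_minus_1_in_cover_hp] \<open>\<zeta>1 = \<zeta>2\<close> by (simp add: algebra_simps)
    then show ?thesis
      using \<tau>1 \<tau>2 True \<open>\<zeta>1 = \<zeta>2\<close> Zk_class_mult_root_unity[OF k c] by (simp add: tran_k_def)
  next
    case False
    then show ?thesis
      using \<tau>1 \<tau>2 \<open>\<zeta>1 = \<zeta>2\<close> by (simp add: tran_k_def)
  qed
qed

lemma hol_transl_eqI:
  assumes "k \<ge> 1" "\<forall>s\<in>cover_hp r. \<phi> (exp s) \<noteq> 0" "has_hol_transl k r \<phi> \<tau>"
  shows "hol_transl k r \<phi> = \<tau>"
  unfolding hol_transl_def
proof (rule the_equality)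
  show "has_hol_transl k r \<phi> \<tau>"
    by fact
  show "\<tau>' = \<tau>" if "has_hol_transl k r \<phi> \<tau>'" for \<tau>'
    using has_hol_transl_unique[OF assms(1,2) that assms(3)] .
qed

lemma holomorphic_Taylor_remainder:
  assumes "g holomorphic_on ball 0 r" "0 < r"
  shows "\<exists>a q. q holomorphic_on ball 0 r \<and> (\<forall>z\<in>ball 0 r. g z = (\<Sum>j<n. a j * z ^ j) + z ^ n * q z)"
proof (induction n)
  case 0
  show ?case
    using assms(1) by (intro exI[of _ "\<lambda>_. 0"] exI[of _ g]) auto
next
  case (Suc n)
  then obtain a q where q: "q holomorphic_on ball 0 r"
    and g: "\<forall>z\<in>ball 0 r. g z = (\<Sum>j<n. a j * z ^ j) + z ^ n * q z"
    by blast
  define q' where "q' = (\<lambda>z. if z = 0 then deriv q 0 else (q z - q 0) / (z - 0))"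
  have "q' holomorphic_on ball 0 r"
    unfolding q'_def by (rule pole_lemma[OF q]) (use assms(2) in auto)
  moreover have "g z = (\<Sum>j<Suc n. (a(n := q 0)) j * z ^ j) + z ^ Suc n * q' z" if "z \<in> ball 0 r" for z
  proof -
    have "q z = q 0 + z * q' z"
      unfolding q'_def by auto
    moreover have "(\<Sum>j<Suc n. (a(n := q 0)) j * z ^ j) = (\<Sum>j<n. a j * z ^ j) + q 0 * z ^ n"
      by simp
    ultimately show ?thesis
      using g that by (simp add: algebra_simps)
  qed
  ultimately show ?case
    by blast
qed

lemma primitive_shift_affine:
  assumes "\<forall>s\<in>cover_hp r. (D has_field_derivative exp (\<alpha> * s) * g (exp s)) (at s)"
  obtains b where "\<forall>s\<in>cover_hp r. D (s + 2 * of_real pi * \<i>) = exp (2 * of_real pi * \<i> * \<alpha>) * D s + b"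
proof -
  let ?w = "2 * of_real pi * \<i>" and ?\<zeta> = "exp (2 * of_real pi * \<i> * \<alpha>)"
  have "\<exists>b. \<forall>s\<in>cover_hp r. D (s + ?w) - ?\<zeta> * D s = b"
  proof (rule has_field_derivative_zero_constant[OF convex_cover_hp])
    fix s assume s: "s \<in> cover_hp r"
    have "((\<lambda>s. D (s + ?w) - ?\<zeta> * D s) has_field_derivative
        exp (\<alpha> * (s + ?w)) * g (exp (s + ?w)) - ?\<zeta> * (exp (\<alpha> * s) * g (exp s))) (at s)"
      using assms s cover_hp_add_2pi[OF s] by (intro derivative_intros DERIV_cmult DERIV_shift[THEN iffD1]) auto
    moreover have "exp (\<alpha> * (s + ?w)) * g (exp (s + ?w)) = ?\<zeta> * (exp (\<alpha> * s) * g (exp s))"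
      by (simp add: exp_add distrib_left mult_ac)
    ultimately show "((\<lambda>s. D (s + ?w) - ?\<zeta> * D s) has_field_derivative 0) (at s within cover_hp r)"
      by (simp add: has_field_derivative_at_within)
  qed
  then show ?thesis
    using that by (metis diff_eq_eq add.commute)
qed

lemma holomorphic_primitive_on_open_convex:
  assumes "open S" "convex S" "f holomorphic_on S"
  obtains F where "\<forall>z\<in>S. (F has_field_derivative f z) (at z)"
proof -
  obtain F where "\<And>z. z \<in> S \<Longrightarrow> (F has_field_derivative f z) (at z within S)"
    using holomorphic_convex_primitive'[OF assms(2,1,3)] by blast
  then show ?thesis
    using that at_within_open[OF _ assms(1)] by metis
qed

locale kth_root_presentation =
  fixes k :: nat and d :: int and r :: real and \<phi> g :: "complex \<Rightarrow> complex"
  assumes k_pos: "k \<ge> 1" and r_pos: "0 < r"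
    and holo: "g holomorphic_on ball 0 r" and nonzero: "\<forall>z\<in>ball 0 r. g z \<noteq> 0"
    and \<phi>_eq: "\<forall>z\<in>ball 0 r - {0}. \<phi> z = z powi d * g z ^ k"

lemma regular_end_iff_kth_root_presentation:
  assumes "k \<ge> 1"
  shows "regular_end d r \<phi> \<longleftrightarrow> (\<exists>g. kth_root_presentation k d r \<phi> g)"
proof
  assume "regular_end d r \<phi>"
  then obtain f where r: "0 < r" and f: "f holomorphic_on ball 0 r" "\<forall>z\<in>ball 0 r. f z \<noteq> 0"
    and \<phi>: "\<forall>z\<in>ball 0 r - {0}. \<phi> z = z powi d * f z"
    unfolding regular_end_def by blast
  obtain L where L: "L holomorphic_on ball 0 r" "\<And>z. z \<in> ball 0 r \<Longrightarrow> f z = exp (L z)"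
    using contractible_imp_holomorphic_log[OF f(1) convex_imp_contractible[OF convex_ball]] f(2) by metis
  have "exp (L z / of_nat k) ^ k = f z" if "z \<in> ball 0 r" for z
    using assms L(2)[OF that] by (simp add: exp_of_nat_mult[symmetric])
  then have "kth_root_presentation k d r \<phi> (\<lambda>z. exp (L z / of_nat k))"
    using assms r L(1) \<phi> by unfold_locales (auto intro!: holomorphic_intros)
  then show "\<exists>g. kth_root_presentation k d r \<phi> g"
    by blast
next
  assume "\<exists>g. kth_root_presentation k d r \<phi> g"
  then obtain g where "kth_root_presentation k d r \<phi> g" ..
  then interpret kth_root_presentation k d r \<phi> g .
  show "regular_end d r \<phi>"
    unfolding regular_end_def using r_pos holo nonzero \<phi>_eq
    by (intro conjI exI[of _ "\<lambda>z. g z ^ k"]) (auto intro!: holomorphic_intros)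
qed

context kth_root_presentation
begin

lemma \<phi>_exp_nonzero: "s \<in> cover_hp r \<Longrightarrow> \<phi> (exp s) \<noteq> 0"
  using \<phi>_eq nonzero exp_cover_hp[OF r_pos] by (auto simp: power_int_0_left_if)

lemma hol_transl_of_primitive:
  assumes \<alpha>: "of_nat k * \<alpha> = of_int (d + int k)"
    and D: "\<forall>s\<in>cover_hp r. (D has_field_derivative exp (\<alpha> * s) * g (exp s)) (at s)"
    and shift: "\<forall>s\<in>cover_hp r. D (s + 2 * of_real pi * \<i>) = exp (2 * of_real pi * \<i> * \<alpha>) * D s + b"
  shows "hol_transl k r \<phi> = tran_k k (exp (2 * of_real pi * \<i> * \<alpha>)) b"
proof (rule hol_transl_eqI[OF k_pos])
  have "deriv D s ^ k = \<phi> (exp s) * exp (of_nat k * s)" if s: "s \<in> cover_hp r" for s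
  proof -
    have "deriv D s = exp (\<alpha> * s) * g (exp s)"
      using D s DERIV_imp_deriv by blast
    then have "deriv D s ^ k = exp (of_nat k * (\<alpha> * s)) * g (exp s) ^ k"
      by (simp add: power_mult_distrib exp_of_nat_mult)
    also have "of_nat k * (\<alpha> * s) = of_int d * s + of_nat k * s"
      using \<alpha> by (metis distrib_right mult.assoc of_int_add of_int_of_nat_eq)
    also have "exp (of_int d * s + of_nat k * s) * g (exp s) ^ k
        = (exp s powi d * g (exp s) ^ k) * exp (of_nat k * s)"
      by (simp add: exp_add exp_power_int)
    also have "\<dots> = \<phi> (exp s) * exp (of_nat k * s)"
      using \<phi>_eq exp_cover_hp[OF r_pos s] by simp
    finally show ?thesis .
  qed
  moreover have "D holomorphic_on cover_hp r"
    using D open_cover_hp by (metis holomorphic_on_open field_differentiable_def)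
  ultimately have "developing_map k r \<phi> D"
    unfolding developing_map_def by blast
  moreover have "exp (2 * of_real pi * \<i> * \<alpha>) ^ k = 1"
  proof -
    have "exp (2 * of_real pi * \<i> * \<alpha>) ^ k = exp (2 * of_real pi * \<i> * (of_nat k * \<alpha>))"
      by (simp add: exp_of_nat_mult[symmetric] mult_ac)
    then show ?thesis
      unfolding \<alpha> by (simp only: exp_2pi_int)
  qed
  ultimately show "has_hol_transl k r \<phi> (tran_k k (exp (2 * of_real pi * \<i> * \<alpha>)) b)"
    unfolding has_hol_transl_def using shift by blast
qed (use \<phi>_exp_nonzero in blast)

lemma hol_transl_eq_0_if_not_dvd:
  assumes "\<not> int k dvd d"
  shows "hol_transl k r \<phi> = Zk_class k 0"
proof -
  define \<alpha> where "\<alpha> = (of_int (d + int k) / of_nat k :: complex)"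
  have \<alpha>: "of_nat k * \<alpha> = of_int (d + int k)"
    using k_pos unfolding \<alpha>_def by simp
  have "(g \<circ> exp) holomorphic_on cover_hp r"
    by (rule holomorphic_on_compose_gen[OF holomorphic_on_exp holo]) (use exp_cover_hp[OF r_pos] in blast)
  then have "(\<lambda>s. exp (\<alpha> * s) * g (exp s)) holomorphic_on cover_hp r"
    unfolding o_def by (intro holomorphic_intros)
  then obtain D where D: "\<forall>s\<in>cover_hp r. (D has_field_derivative exp (\<alpha> * s) * g (exp s)) (at s)"
    using holomorphic_primitive_on_open_convex[OF open_cover_hp convex_cover_hp] by blast
  obtain b where "\<forall>s\<in>cover_hp r. D (s + 2 * of_real pi * \<i>) = exp (2 * of_real pi * \<i> * \<alpha>) * D s + b"
    using primitive_shift_affine[OF D] .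
  with D have hol: "hol_transl k r \<phi> = tran_k k (exp (2 * of_real pi * \<i> * \<alpha>)) b"
    by (rule hol_transl_of_primitive[OF \<alpha>])
  have "exp (2 * of_real pi * \<i> * \<alpha>) \<noteq> 1"
  proof
    assume "exp (2 * of_real pi * \<i> * \<alpha>) = 1"
    then obtain n :: int where "Im (2 * of_real pi * \<i> * \<alpha>) = of_int (2 * n) * pi"
      by (auto simp: exp_eq_1)
    moreover have "Im (2 * of_real pi * \<i> * \<alpha>) = 2 * pi * (of_int (d + int k) / of_nat k)"
      unfolding \<alpha>_def by simp
    ultimately have "2 * pi * (of_int (d + int k) / real k) = 2 * pi * of_int n"
      by (simp add: mult_ac)
    then have "of_int (d + int k) / real k = of_int n"
      using pi_gt_zero by (metis mult_cancel_left mult_eq_0_iff pi_neq_zero zero_neq_numeral)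
    then have "real_of_int (d + int k) = of_int n * real k"
      using k_pos by (simp add: field_simps)
    then have "d + int k = n * int k"
      by (metis of_int_eq_iff of_int_mult of_int_of_nat_eq)
    then have "d = (n - 1) * int k"
      by (simp add: algebra_simps)
    then show False
      using assms by simp
  qed
  then show ?thesis
    using hol by (simp add: tran_k_def)
qed

lemma hol_transl_eq_0_if_nonneg_multiple:
  assumes "d = int k * int e"
  shows "hol_transl k r \<phi> = Zk_class k 0"
proof -
  have "(\<lambda>z. z ^ e * g z) holomorphic_on ball 0 r"
    using holo by (intro holomorphic_intros)
  then obtain P where P: "\<forall>z\<in>ball 0 r. (P has_field_derivative z ^ e * g z) (at z)"
    using holomorphic_primitive_on_open_convex[OF open_ball convex_ball] by blast
  have "((\<lambda>s. P (exp s)) has_field_derivative exp (of_nat (Suc e) * s) * g (exp s)) (at s)"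
    if s: "s \<in> cover_hp r" for s
  proof -
    have "((\<lambda>s. P (exp s)) has_field_derivative (exp s ^ e * g (exp s)) * exp s) (at s)"
      using P exp_cover_hp[OF r_pos s] by (intro DERIV_chain'[OF DERIV_exp]) auto
    moreover have "exp (of_nat (Suc e) * s) = exp s ^ e * exp s"
      by (simp only: exp_of_nat_mult power_Suc2)
    ultimately show ?thesis
      by (simp only: mult_ac)
  qed
  moreover have "of_nat k * of_nat (Suc e) = (of_int (d + int k) :: complex)"
    using assms by (simp add: algebra_simps)
  moreover have "exp (2 * of_real pi * \<i> * of_nat (Suc e)) = 1"
    using exp_2pi_int[of "int (Suc e)"] by simp
  ultimately have "hol_transl k r \<phi> = tran_k k 1 0"
    using hol_transl_of_primitive[where D = "\<lambda>s. P (exp s)" and b = 0] by (simp add: exp_add)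
  then show ?thesis
    by (simp add: tran_k_def)
qed

text \<open>With \<open>\<alpha> = -m\<close> the integrand is \<open>\<Sum>j<m. a j exp((j - m) s) + a m + e\<^sup>s q(e\<^sup>s)\<close>;
  only the constant term \<open>a m\<close> has a primitive that is not \<open>2\<pi>i\<close>-periodic.\<close>

lemma hol_transl_neg_multiple:
  assumes d: "d = - (int (Suc m) * int k)" and q: "q holomorphic_on ball 0 r"
    and g: "\<forall>z\<in>ball 0 r. g z = (\<Sum>j\<le>m. a j * z ^ j) + z ^ Suc m * q z"
  shows "hol_transl k r \<phi> = Zk_class k (2 * of_real pi * \<i> * a m)"
proof -
  let ?w = "2 * of_real pi * \<i>"
  obtain Q where Q: "\<forall>z\<in>ball 0 r. (Q has_field_derivative q z) (at z)"
    using holomorphic_primitive_on_open_convex[OF open_ball convex_ball q] by blast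
  define c where "c j = (of_int (int j - int m) :: complex)" for j
  define D where "D s = (\<Sum>j<m. a j * exp (c j * s) / c j) + a m * s + Q (exp s)" for s
  have "(D has_field_derivative exp (- of_nat m * s) * g (exp s)) (at s)"
    if s: "s \<in> cover_hp r" for s
  proof -
    have es: "exp s \<in> ball 0 r"
      using exp_cover_hp[OF r_pos s] by auto
    have "((\<lambda>s. a j * exp (c j * s) / c j) has_field_derivative a j * exp (c j * s)) (at s)"
      if "j < m" for j
      using that by (auto intro!: derivative_eq_intros simp: c_def)
    moreover have "((\<lambda>s. Q (exp s)) has_field_derivative q (exp s) * exp s) (at s)"
      using DERIV_chain'[OF DERIV_exp] Q es by blast
    ultimately have "(D has_field_derivative (\<Sum>j<m. a j * exp (c j * s)) + a m * 1 + q (exp s) * exp s) (at s)"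
      unfolding D_def[abs_def] by (intro derivative_intros) auto
    moreover have "exp (- of_nat m * s) * g (exp s) = (\<Sum>j<m. a j * exp (c j * s)) + a m * 1 + q (exp s) * exp s"
    proof -
      have pow: "exp (- of_nat m * s) * exp s ^ j = exp (c j * s)" for j
        unfolding c_def by (simp add: exp_of_nat_mult[symmetric] exp_add[symmetric] algebra_simps)
      have "exp (- of_nat m * s) * g (exp s)
          = (\<Sum>j\<le>m. a j * (exp (- of_nat m * s) * exp s ^ j)) + exp (- of_nat m * s) * exp s ^ Suc m * q (exp s)"
        using g es by (simp add: sum_distrib_left algebra_simps)
      also have "\<dots> = (\<Sum>j\<le>m. a j * exp (c j * s)) + exp s * q (exp s)"
        unfolding pow by (simp add: c_def)
      finally show ?thesis
        by (simp add: c_def flip: lessThan_Suc_atMost)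
    qed
    ultimately show ?thesis
      by simp
  qed
  moreover have "of_nat k * (- of_nat m) = (of_int (d + int k) :: complex)"
    unfolding d by (simp add: algebra_simps)
  moreover have "exp (?w * (- of_nat m)) = 1"
    using exp_2pi_int[of "- int m"] by simp
  moreover have "D (s + ?w) = D s + ?w * a m" for s
  proof -
    have "exp (c j * (s + ?w)) = exp (c j * s) * exp (?w * of_int (int j - int m))" for j
      unfolding c_def by (simp add: exp_add[symmetric] algebra_simps)
    then have "exp (c j * (s + ?w)) = exp (c j * s)" for j
      by (simp only: exp_2pi_int mult_1_right)
    then show ?thesis
      unfolding D_def by (simp add: exp_add algebra_simps)
  qed
  ultimately have "hol_transl k r \<phi> = tran_k k 1 (?w * a m)"
    using hol_transl_of_primitive[of "- of_nat m" D "?w * a m"] by simp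
  then show ?thesis
    by (simp add: tran_k_def)
qed

lemma hol_transl_neg_multiple_expansion:
  assumes d: "d = - (int (Suc m) * int k)"
  obtains a q where "q holomorphic_on ball 0 r"
    "\<forall>z\<in>ball 0 r. g z = (\<Sum>j\<le>m. a j * z ^ j) + z ^ Suc m * q z"
    "hol_transl k r \<phi> = Zk_class k (2 * of_real pi * \<i> * a m)"
  using holomorphic_Taylor_remainder[OF holo r_pos, of "Suc m"] hol_transl_neg_multiple[OF d] that
  by (metis lessThan_Suc_atMost)

end

lemma hol_transl_regular_end_eq_0:
  assumes "regular_end d r \<phi>" "k \<ge> 1" "\<nexists>n::int. n \<ge> 1 \<and> d = - n * int k"
  shows "hol_transl k r \<phi> = Zk_class k 0"
proof -
  obtain g where "kth_root_presentation k d r \<phi> g"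
    using assms(1,2) regular_end_iff_kth_root_presentation by blast
  then interpret kth_root_presentation k d r \<phi> g .
  show ?thesis
  proof (cases "int k dvd d")
    case True
    then obtain e where "d = int k * e"
      by blast
    moreover have "e \<ge> 0"
    proof (rule ccontr)
      assume "\<not> e \<ge> 0"
      then have "- e \<ge> 1 \<and> d = - (- e) * int k"
        using \<open>d = int k * e\<close> by simp
      then show False
        using assms(3) by blast
    qed
    ultimately have "d = int k * int (nat e)"
      by simp
    then show ?thesis
      by (rule hol_transl_eq_0_if_nonneg_multiple)
  qed (rule hol_transl_eq_0_if_not_dvd)
qed

lemma hol_transl_regular_end_minus_k:
  assumes "regular_end (- int k) r \<phi>" "k \<ge> 1"
  shows "hol_transl k r \<phi> \<noteq> Zk_class k 0"
proof -
  obtain g where "kth_root_presentation k (- int k) r \<phi> g"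
    using assms regular_end_iff_kth_root_presentation by blast
  then interpret kth_root_presentation k "- int k" r \<phi> g .
  have "- int k = - (int (Suc 0) * int k)"
    by simp
  then obtain a q where "q holomorphic_on ball 0 r"
    and g: "\<forall>z\<in>ball 0 r. g z = (\<Sum>j\<le>0. a j * z ^ j) + z ^ Suc 0 * q z"
    and hol: "hol_transl k r \<phi> = Zk_class k (2 * of_real pi * \<i> * a 0)"
    by (rule hol_transl_neg_multiple_expansion)
  have "a 0 = g 0"
    using g r_pos by simp
  then have "a 0 \<noteq> 0"
    using nonzero r_pos by simp
  then show ?thesis
    using hol Zk_class_eq_0_iff by simp
qed

section \<open>Ends with prescribed holonomy translation\<close>

lemma exists_end_minus_k:
  assumes "k \<ge> 1" "c \<noteq> 0"
  shows "\<exists>r \<phi>. regular_end (- int k) r \<phi> \<and> hol_transl k r \<phi> = Zk_class k (2 * of_real pi * \<i> * c)"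
proof -
  let ?\<phi> = "\<lambda>z. z powi (- int k) * c ^ k"
  interpret kth_root_presentation k "- int k" 1 ?\<phi> "\<lambda>_. c"
    using assms by unfold_locales auto
  have "hol_transl k 1 ?\<phi> = Zk_class k (2 * of_real pi * \<i> * c)"
    by (rule hol_transl_neg_multiple[of 0 "\<lambda>_. 0" "\<lambda>_. c"]) auto
  moreover have "regular_end (- int k) 1 ?\<phi>"
    using regular_end_iff_kth_root_presentation assms(1) kth_root_presentation_axioms by blast
  ultimately show ?thesis
    by blast
qed

lemma exists_end_neg_multiple:
  assumes "k \<ge> 1" "m \<ge> 1"
  shows "\<exists>r \<phi>. regular_end (- (int (Suc m) * int k)) r \<phi> \<and>
           hol_transl k r \<phi> = Zk_class k (2 * of_real pi * \<i> * c)"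
proof -
  define r where "r = 1 / (norm c + 1)"
  have c1: "0 < norm c + 1"
    by (simp add: add_nonneg_pos)
  then have r: "0 < r" "r \<le> 1"
    unfolding r_def by (auto simp: field_simps)
  have nonzero: "1 + c * z ^ m \<noteq> 0" if "z \<in> ball 0 r" for z
  proof -
    have "norm z < r"
      using that by simp
    then have "norm (z ^ m) \<le> norm z"
      using r assms(2) power_decreasing[of 1 m "norm z"] by (simp add: norm_power)
    then have "norm (c * z ^ m) \<le> norm c * r"
      using \<open>norm z < r\<close> by (simp add: norm_mult mult_left_mono)
    also have "\<dots> < 1"
      unfolding r_def using c1 by (simp add: field_simps)
    finally show ?thesis
      by (metis add.commute add_eq_0_iff norm_minus_cancel norm_one order_less_irrefl)
  qed
  let ?\<phi> = "\<lambda>z. z powi (- (int (Suc m) * int k)) * (1 + c * z ^ m) ^ k"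
  interpret kth_root_presentation k "- (int (Suc m) * int k)" r ?\<phi> "\<lambda>z. 1 + c * z ^ m"
    using assms(1) r nonzero by unfold_locales (auto intro!: holomorphic_intros)
  define a where "a j = (if j = 0 then 1 else 0) + (if j = m then c else 0)" for j
  have "(\<Sum>j\<le>m. a j * z ^ j) = 1 + c * z ^ m" for z
  proof -
    have "a j * z ^ j = (if j = 0 then 1 else 0) + (if j = m then c * z ^ m else 0)" for j
      unfolding a_def by auto
    then show ?thesis
      by (simp add: sum.distrib)
  qed
  then have "hol_transl k r ?\<phi> = Zk_class k (2 * of_real pi * \<i> * a m)"
    by (intro hol_transl_neg_multiple[of m "\<lambda>_. 0"]) auto
  moreover have "a m = c"
    unfolding a_def using assms(2) by simp
  moreover have "regular_end (- (int (Suc m) * int k)) r ?\<phi>"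
    using regular_end_iff_kth_root_presentation assms(1) kth_root_presentation_axioms by blast
  ultimately show ?thesis
    by auto
qed

lemma exists_end_trivial_hol_transl:
  assumes "k \<ge> 1" "\<nexists>n::int. n \<ge> 1 \<and> d = - n * int k"
  shows "\<exists>r \<phi>. regular_end d r \<phi> \<and> hol_transl k r \<phi> = Zk_class k 0"
proof -
  have "regular_end d 1 (\<lambda>z. z powi d)"
    unfolding regular_end_def by (intro conjI exI[of _ "\<lambda>_. 1"]) auto
  then show ?thesis
    using hol_transl_regular_end_eq_0[OF _ assms] by blast
qed

lemma exists_end_with_hol_transl:
  assumes k: "k \<ge> 1"
    and mult: "Zk_class k b \<noteq> Zk_class k 0 \<longrightarrow> (\<exists>n::int. n \<ge> 1 \<and> d = - n * int k)"
    and minus_k: "d = - int k \<longrightarrow> Zk_class k b \<noteq> Zk_class k 0"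
  shows "\<exists>r \<phi>. regular_end d r \<phi> \<and> hol_transl k r \<phi> = Zk_class k b"
proof (cases "\<exists>n::int. n \<ge> 1 \<and> d = - n * int k")
  case False
  then show ?thesis
    using exists_end_trivial_hol_transl[OF k] mult by auto
next
  case True
  then obtain n :: int where "n \<ge> 1" "d = - n * int k"
    by blast
  then obtain m where d: "d = - (int (Suc m) * int k)"
    by (intro that[of "nat (n - 1)"]) simp
  have b: "b = 2 * of_real pi * \<i> * (b / (2 * of_real pi * \<i>))"
    by simp
  show ?thesis
  proof (cases "m = 0")
    case True
    then have "b \<noteq> 0"
      using minus_k d Zk_class_eq_0_iff by simp
    then show ?thesis
      using exists_end_minus_k[OF k, of "b / (2 * of_real pi * \<i>)"] d True b by simp
  next
    case False
    then show ?thesis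
      using exists_end_neg_multiple[OF k, of m "b / (2 * of_real pi * \<i>)"] d b by simp
  qed
qed

section \<open>Normal forms\<close>

text \<open>In the coordinate \<open>w = N z\<close> near the puncture, \<open>\<phi> dz^k\<close> becomes \<open>\<psi> dw^k\<close>.\<close>

definition normalizing_chart ::
    "nat \<Rightarrow> (complex \<Rightarrow> complex) \<Rightarrow> real \<Rightarrow> (complex \<Rightarrow> complex) \<Rightarrow> (complex \<Rightarrow> complex) \<Rightarrow> bool" where
  "normalizing_chart k \<psi> r \<phi> N \<longleftrightarrow>
     (\<exists>\<rho>. 0 < \<rho> \<and> \<rho> \<le> r \<and> N holomorphic_on ball 0 \<rho> \<and> N 0 = 0 \<and> deriv N 0 \<noteq> 0 \<and>
        (\<forall>z\<in>ball 0 \<rho> - {0}. \<psi> (N z) * deriv N z ^ k = \<phi> z))"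

lemma holomorphic_local_inverse_at_0:
  assumes "N holomorphic_on ball 0 \<rho>" "0 < \<rho>" "deriv N 0 \<noteq> 0"
  obtains \<sigma> G where "0 < \<sigma>" "ball (0::complex) \<sigma> \<subseteq> ball 0 \<rho>" "inj_on N (ball 0 \<sigma>)" "open (N ` ball 0 \<sigma>)"
    "G holomorphic_on N ` ball 0 \<sigma>"
    "\<forall>z\<in>ball 0 \<sigma>. G (N z) = z \<and> deriv N z * deriv G (N z) = 1"
proof -
  obtain \<sigma> where \<sigma>: "0 < \<sigma>" "ball (0::complex) \<sigma> \<subseteq> ball 0 \<rho>" "inj_on N (ball 0 \<sigma>)"
    using has_complex_derivative_locally_injective[OF assms(1) _ open_ball assms(3)] assms(2) by auto
  have "N holomorphic_on ball 0 \<sigma>"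
    using assms(1) \<sigma>(2) by (rule holomorphic_on_subset)
  then show ?thesis
    using that \<sigma> holomorphic_has_inverse[OF _ open_ball \<sigma>(3)] open_mapping_thm3[OF _ open_ball \<sigma>(3)]
    by metis
qed

lemma holomorphic_transition_map_at_0:
  assumes N1: "N1 holomorphic_on ball 0 \<rho>1" "0 < \<rho>1" "N1 0 = 0" "deriv N1 0 \<noteq> 0"
    and N2: "N2 holomorphic_on ball 0 \<rho>2" "0 < \<rho>2" "N2 0 = 0" "deriv N2 0 \<noteq> 0"
  obtains \<epsilon> h where "0 < \<epsilon>" "\<epsilon> \<le> \<rho>1" "h holomorphic_on ball 0 \<epsilon>" "inj_on h (ball 0 \<epsilon>)" "h 0 = 0"
    "h ` ball 0 \<epsilon> \<subseteq> ball 0 \<rho>2"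
    "\<And>z. z \<in> ball 0 \<epsilon> \<Longrightarrow> N2 (h z) = N1 z \<and> deriv N1 z = deriv N2 (h z) * deriv h z"
proof -
  obtain \<sigma> G where \<sigma>: "0 < \<sigma>" "ball (0::complex) \<sigma> \<subseteq> ball 0 \<rho>2" "inj_on N2 (ball 0 \<sigma>)"
    and V: "open (N2 ` ball 0 \<sigma>)" and G: "G holomorphic_on N2 ` ball 0 \<sigma>"
    and G_inv: "\<forall>z\<in>ball 0 \<sigma>. G (N2 z) = z \<and> deriv N2 z * deriv G (N2 z) = 1"
    by (rule holomorphic_local_inverse_at_0[OF N2(1,2,4)])
  obtain \<sigma>1 where \<sigma>1: "0 < \<sigma>1" "ball (0::complex) \<sigma>1 \<subseteq> ball 0 \<rho>1" "inj_on N1 (ball 0 \<sigma>1)"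
    using has_complex_derivative_locally_injective[OF N1(1) _ open_ball N1(4)] N1(2) by auto
  let ?V = "N2 ` ball 0 \<sigma>"
  have "open (ball 0 \<sigma>1 \<inter> N1 -` ?V)"
    using holomorphic_on_imp_continuous_on[OF holomorphic_on_subset[OF N1(1) \<sigma>1(2)]]
    by (intro continuous_open_preimage open_ball V)
  moreover have "0 \<in> ball 0 \<sigma>1 \<inter> N1 -` ?V"
    using \<sigma>1(1) \<sigma>(1) by (auto intro!: rev_image_eqI[of 0] simp: N1(3) N2(3))
  ultimately obtain \<epsilon> where \<epsilon>: "\<epsilon> > 0" "ball (0::complex) \<epsilon> \<subseteq> ball 0 \<sigma>1 \<inter> N1 -` ?V"
    by (rule openE)
  have "\<epsilon> \<le> \<rho>1"
    using \<epsilon> \<sigma>1(2) ball_subset_ball_iff[of 0 \<epsilon> 0 \<rho>1] by auto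
  define h where "h z = G (N1 z)" for z
  have lift: "h z \<in> ball 0 \<sigma> \<and> N2 (h z) = N1 z" if z: "z \<in> ball 0 \<epsilon>" for z
  proof -
    obtain y where "y \<in> ball 0 \<sigma>" "N1 z = N2 y"
      using \<epsilon>(2) z by blast
    then show ?thesis
      unfolding h_def using G_inv by simp
  qed
  have N1_holo: "N1 holomorphic_on ball 0 \<epsilon>"
    using \<epsilon>(2) \<sigma>1(2) by (intro holomorphic_on_subset[OF N1(1)]) blast
  have h_holo: "h holomorphic_on ball 0 \<epsilon>"
    unfolding h_def using holomorphic_on_compose_gen[OF N1_holo G] \<epsilon>(2) by (auto simp: o_def)
  have h_inj: "inj_on h (ball 0 \<epsilon>)"
  proof (rule inj_onI)
    fix x y assume "x \<in> ball 0 \<epsilon>" "y \<in> ball 0 \<epsilon>" "h x = h y"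
    then have "N1 x = N1 y"
      using lift by metis
    then show "x = y"
      using inj_onD[OF \<sigma>1(3)] \<open>x \<in> ball 0 \<epsilon>\<close> \<open>y \<in> ball 0 \<epsilon>\<close> \<epsilon>(2) by blast
  qed
  have h0: "h 0 = 0"
    unfolding h_def using bspec[OF G_inv, of 0] \<sigma>(1) N1(3) N2(3) by simp
  have h_img: "h ` ball 0 \<epsilon> \<subseteq> ball 0 \<rho>2"
    using lift \<sigma>(2) by blast
  have h_deriv: "deriv N1 z = deriv N2 (h z) * deriv h z" if z: "z \<in> ball 0 \<epsilon>" for z
  proof -
    have "N1 z \<in> ?V"
      using lift[OF z] by (metis imageI)
    have "(N1 has_field_derivative deriv N1 z) (at z)"
      using holomorphic_derivI[OF N1_holo open_ball z] .
    moreover have "(G has_field_derivative deriv G (N1 z)) (at (N1 z))"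
      using holomorphic_derivI[OF G V \<open>N1 z \<in> ?V\<close>] .
    ultimately have "deriv h z = deriv G (N1 z) * deriv N1 z"
      unfolding h_def[abs_def] by (intro DERIV_imp_deriv) (rule DERIV_chain')
    moreover have "deriv N2 (h z) * deriv G (N1 z) = 1"
      using lift[OF z] G_inv by metis
    ultimately show ?thesis
      by (metis mult.assoc mult_1)
  qed
  show ?thesis
    by (rule that[OF \<epsilon>(1) \<open>\<epsilon> \<le> \<rho>1\<close> h_holo h_inj h0 h_img]) (use lift h_deriv in blast)
qed

lemma ends_equiv_if_normalizing_charts:
  assumes "normalizing_chart k \<psi> r1 \<phi>1 N1" "normalizing_chart k \<psi> r2 \<phi>2 N2"
  shows "ends_equiv k r1 \<phi>1 r2 \<phi>2"
proof -
  obtain \<rho>1 where \<rho>1: "0 < \<rho>1" "\<rho>1 \<le> r1" "N1 holomorphic_on ball 0 \<rho>1" "N1 0 = 0" "deriv N1 0 \<noteq> 0"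
    and pull1: "\<forall>z\<in>ball 0 \<rho>1 - {0}. \<psi> (N1 z) * deriv N1 z ^ k = \<phi>1 z"
    using assms(1) unfolding normalizing_chart_def by blast
  obtain \<rho>2 where \<rho>2: "0 < \<rho>2" "\<rho>2 \<le> r2" "N2 holomorphic_on ball 0 \<rho>2" "N2 0 = 0" "deriv N2 0 \<noteq> 0"
    and pull2: "\<forall>z\<in>ball 0 \<rho>2 - {0}. \<psi> (N2 z) * deriv N2 z ^ k = \<phi>2 z"
    using assms(2) unfolding normalizing_chart_def by blast
  obtain \<epsilon> h where \<epsilon>: "0 < \<epsilon>" "\<epsilon> \<le> \<rho>1" and h: "h holomorphic_on ball 0 \<epsilon>" "inj_on h (ball 0 \<epsilon>)"
    "h 0 = 0" "h ` ball 0 \<epsilon> \<subseteq> ball 0 \<rho>2"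
    and trans: "\<And>z. z \<in> ball 0 \<epsilon> \<Longrightarrow> N2 (h z) = N1 z \<and> deriv N1 z = deriv N2 (h z) * deriv h z"
    using holomorphic_transition_map_at_0[OF \<rho>1(3,1,4,5) \<rho>2(3,1,4,5)] by blast
  have "\<phi>2 (h z) * deriv h z ^ k = \<phi>1 z" if z: "z \<in> ball 0 \<epsilon> - {0}" for z
  proof -
    have "h z \<noteq> 0"
      using z h(2,3) \<epsilon>(1) inj_onD[OF h(2), of z 0] by auto
    moreover have "h z \<in> ball 0 \<rho>2"
      using h(4) z by blast
    ultimately have "\<psi> (N2 (h z)) * deriv N2 (h z) ^ k = \<phi>2 (h z)"
      using pull2 by blast
    then have "\<phi>2 (h z) = \<psi> (N1 z) * deriv N2 (h z) ^ k"
      using z trans[of z] by simp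
    moreover have "z \<in> ball 0 \<rho>1 - {0}"
      using z \<epsilon>(2) by auto
    with pull1 have "\<psi> (N1 z) * deriv N1 z ^ k = \<phi>1 z"
      by blast
    then have "\<phi>1 z = \<psi> (N1 z) * (deriv N2 (h z) * deriv h z) ^ k"
      using z trans[of z] by simp
    ultimately show ?thesis
      by (simp add: power_mult_distrib mult.assoc)
  qed
  moreover have "ball 0 \<rho>2 \<subseteq> ball (0::complex) r2"
    using \<rho>2(2) by auto
  ultimately show ?thesis
    unfolding ends_equiv_def using \<epsilon> \<rho>1(2) h by (intro exI[of _ \<epsilon>] exI[of _ h]) auto
qed

lemma fps_conv_radius_divide_shift:
  fixes F :: "complex fps" and a :: complex
  assumes a: "\<And>j. of_nat j + a \<noteq> 0"
  shows "fps_conv_radius (Abs_fps (\<lambda>j. fps_nth F j / (of_nat j + a))) \<ge> fps_conv_radius F"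
  unfolding fps_conv_radius_def
proof (rule conv_radius_geI_ex')
  have "(\<lambda>j. 1 / (of_nat j + a)) \<longlonglongrightarrow> 0"
    by (intro tendsto_divide_0[OF tendsto_const] tendsto_add_filterlim_at_infinity'[OF _ tendsto_const]
        filterlim_norm_at_top_imp_at_infinity) (simp add: filterlim_real_sequentially)
  then obtain B where B: "\<And>j. norm (1 / (of_nat j + a)) \<le> B"
    using convergent_imp_Bseq[OF convergentI] by (metis BseqE)
  fix \<rho> :: real assume \<rho>: "0 < \<rho>" "ereal \<rho> < conv_radius (fps_nth F)"
  have summ: "summable (\<lambda>n. norm (fps_nth F n * of_real \<rho> ^ n))"
    by (rule abs_summable_in_conv_radius) (use \<rho> in simp)
  have bound: "norm (fps_nth F n / (of_nat n + a) * of_real \<rho> ^ n) \<le> B * norm (fps_nth F n * of_real \<rho> ^ n)"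
    for n
  proof -
    have "norm (fps_nth F n / (of_nat n + a) * of_real \<rho> ^ n)
        = norm (1 / (of_nat n + a)) * norm (fps_nth F n * of_real \<rho> ^ n)"
      by (simp add: norm_mult norm_divide)
    then show ?thesis
      by (simp add: B mult_right_mono)
  qed
  show "summable (\<lambda>n. fps_nth (Abs_fps (\<lambda>j. fps_nth F j / (of_nat j + a))) n * of_real \<rho> ^ n)"
    by (rule summable_comparison_test'[where N = 0, OF summable_mult[OF summ, of B]]) (use bound in simp)
qed

text \<open>Coefficientwise, \<open>G\<^sub>j = g\<^sub>j / (j + a)\<close>.\<close>

lemma Euler_ode_holomorphic_solution:
  fixes g :: "complex \<Rightarrow> complex" and a :: complex
  assumes g: "g holomorphic_on ball 0 r" and a: "\<And>j. of_nat j + a \<noteq> 0"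
  obtains G where "G holomorphic_on ball 0 r" "\<forall>z\<in>ball 0 r. a * G z + z * deriv G z = g z"
proof -
  define F where "F = fps_expansion g 0"
  have g': "g holomorphic_on eball 0 (ereal r)"
    using g by simp
  define Fa where "Fa = Abs_fps (\<lambda>j. fps_nth F j / (of_nat j + a))"
  have radius_Fa: "fps_conv_radius Fa \<ge> fps_conv_radius F"
    unfolding Fa_def using a by (rule fps_conv_radius_divide_shift)
  have radius_F: "fps_conv_radius F \<ge> ereal r"
    unfolding F_def by (rule conv_radius_fps_expansion[OF g'])
  have radius: "ereal (norm z) < fps_conv_radius Fa" if "z \<in> ball 0 r" for z
  proof -
    have "ereal (norm z) < ereal r"
      using that by simp
    then show ?thesis
      using radius_F radius_Fa by (meson order_less_le_trans)
  qed
  have "fps_const a * Fa + fps_X * fps_deriv Fa = F"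
  proof (rule fps_ext)
    fix n
    have "a * (fps_nth F n / (of_nat n + a)) + of_nat n * (fps_nth F n / (of_nat n + a))
        = (of_nat n + a) * (fps_nth F n / (of_nat n + a))"
      by (simp add: algebra_simps add_divide_distrib)
    also have "\<dots> = fps_nth F n"
      using a[of n] by simp
    finally show "fps_nth (fps_const a * Fa + fps_X * fps_deriv Fa) n = fps_nth F n"
      unfolding Fa_def by (cases n) (simp_all add: algebra_simps)
  qed
  then have "a * eval_fps Fa z + z * eval_fps (fps_deriv Fa) z = g z" if z: "z \<in> ball 0 r" for z
  proof -
    have Rd: "ereal (norm z) < fps_conv_radius (fps_deriv Fa)"
      using radius[OF z] fps_conv_radius_deriv[of Fa] order_less_le_trans by blast
    have R1: "ereal (norm z) < fps_conv_radius (fps_const a * Fa)"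
      using radius[OF z] fps_conv_radius_mult[of "fps_const a" Fa] by (simp add: order_less_le_trans)
    have R2: "ereal (norm z) < fps_conv_radius (fps_X * fps_deriv Fa)"
      using Rd fps_conv_radius_mult[of fps_X "fps_deriv Fa"] by (simp add: order_less_le_trans)
    have "eval_fps (fps_const a * Fa + fps_X * fps_deriv Fa) z = a * eval_fps Fa z + z * eval_fps (fps_deriv Fa) z"
      using R1 R2 Rd radius[OF z] by (simp add: eval_fps_add eval_fps_mult)
    moreover have "eval_fps F z = g z"
      using eval_fps_expansion'[OF g', of z] z unfolding F_def by simp
    ultimately show ?thesis
      using \<open>fps_const a * Fa + fps_X * fps_deriv Fa = F\<close> by simp
  qed
  moreover have "deriv (eval_fps Fa) z = eval_fps (fps_deriv Fa) z" if "z \<in> ball 0 r" for z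
    by (rule eval_fps_deriv[symmetric, OF radius[OF that]])
  moreover have "eval_fps Fa holomorphic_on ball 0 r"
    using holomorphic_on_open has_field_derivative_eval_fps[OF radius] by (metis field_differentiable_def open_ball)
  ultimately show ?thesis
    using that by (metis (no_types, lifting))
qed

lemma normalizing_chart_cong:
  assumes "normalizing_chart k \<psi> \<rho> \<phi>' N" "\<rho> \<le> r" "\<forall>z\<in>ball 0 r - {0}. \<phi> z = \<phi>' z"
  shows "normalizing_chart k \<psi> r \<phi> N"
proof -
  obtain \<rho>' where \<rho>': "0 < \<rho>'" "\<rho>' \<le> \<rho>" "N holomorphic_on ball 0 \<rho>'" "N 0 = 0" "deriv N 0 \<noteq> 0"
    and pull: "\<forall>z\<in>ball 0 \<rho>' - {0}. \<psi> (N z) * deriv N z ^ k = \<phi>' z"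
    using assms(1) unfolding normalizing_chart_def by blast
  have "\<rho>' \<le> r"
    using \<rho>'(2) assms(2) by linarith
  then have "\<forall>z\<in>ball 0 \<rho>' - {0}. \<psi> (N z) * deriv N z ^ k = \<phi> z"
    using pull assms(3) by force
  then show ?thesis
    unfolding normalizing_chart_def using \<rho>' \<open>\<rho>' \<le> r\<close> by blast
qed

lemma holomorphic_nonzero_near_0:
  assumes "H holomorphic_on ball 0 r" "0 < r" "H 0 \<noteq> 0"
  obtains \<rho> where "0 < \<rho>" "\<rho> \<le> r" "\<forall>z\<in>ball 0 \<rho>. H z \<noteq> 0"
proof -
  have "continuous (at 0) H"
    using holomorphic_on_imp_continuous_on[OF assms(1)] assms(2) by (simp add: continuous_on_eq_continuous_at)
  then obtain \<epsilon> where "\<epsilon> > 0" "\<forall>z. dist 0 z < \<epsilon> \<longrightarrow> H z \<noteq> 0"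
    using continuous_at_avoid assms(3) by blast
  then show ?thesis
    using that[of "min \<epsilon> r"] assms(2) by simp
qed

text \<open>If \<open>a H + z H' = a g\<close> then \<open>(z^a H)' = a z^(a-1) g\<close>, so \<open>N = z H^(1/a)\<close> satisfies
  \<open>N^(a-1) N' = z^(a-1) g\<close>; for \<open>k a = d + k\<close> the \<open>k\<close>-th power of this identity is
  single-valued.\<close>

lemma normalizing_chart_power_from_Euler:
  fixes H g :: "complex \<Rightarrow> complex"
  assumes \<rho>: "0 < \<rho>" and H: "H holomorphic_on ball 0 \<rho>" "\<forall>z\<in>ball 0 \<rho>. H z \<noteq> 0"
    and ode: "\<forall>z\<in>ball 0 \<rho>. a * H z + z * deriv H z = a * g z"
    and a: "of_nat k * a = of_int (d + int k)" "a \<noteq> 0"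
  shows "\<exists>N. normalizing_chart k (\<lambda>w. w powi d) \<rho> (\<lambda>z. z powi d * g z ^ k) N"
proof -
  obtain \<Lambda> where \<Lambda>: "\<Lambda> holomorphic_on ball 0 \<rho>" "\<And>z. z \<in> ball 0 \<rho> \<Longrightarrow> H z = exp (\<Lambda> z)"
    using contractible_imp_holomorphic_log[OF H(1) convex_imp_contractible[OF convex_ball]] H(2) by metis
  define N where "N z = z * exp (\<Lambda> z / a)" for z
  have d\<Lambda>: "(\<Lambda> has_field_derivative deriv \<Lambda> z) (at z)" if "z \<in> ball 0 \<rho>" for z
    using holomorphic_derivI[OF \<Lambda>(1) open_ball that] .
  have dN: "(N has_field_derivative exp (\<Lambda> z / a) * (1 + z * deriv \<Lambda> z / a)) (at z)"
    if "z \<in> ball 0 \<rho>" for z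
    unfolding N_def[abs_def] using a(2)
    by (auto intro!: derivative_eq_intros d\<Lambda>[OF that] simp: field_simps)
  have "N holomorphic_on ball 0 \<rho>"
    using dN by (metis holomorphic_on_open open_ball field_differentiable_def)
  moreover have "N 0 = 0"
    unfolding N_def by simp
  moreover have "deriv N 0 \<noteq> 0"
    using DERIV_imp_deriv[OF dN[of 0]] \<rho> by simp
  moreover have "N z powi d * deriv N z ^ k = z powi d * g z ^ k" if z: "z \<in> ball 0 \<rho> - {0}" for z
  proof -
    have zb: "z \<in> ball 0 \<rho>"
      using z by simp
    define W where "W = exp (\<Lambda> z / a)"
    have H\<Lambda>: "H z * deriv \<Lambda> z = deriv H z"
    proof -
      have "((\<lambda>z. exp (\<Lambda> z)) has_field_derivative exp (\<Lambda> z) * deriv \<Lambda> z) (at z)"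
        by (auto intro!: derivative_eq_intros d\<Lambda>[OF zb])
      then have "(H has_field_derivative exp (\<Lambda> z) * deriv \<Lambda> z) (at z)"
        by (rule has_field_derivative_transform_within_open[OF _ open_ball zb]) (use \<Lambda>(2) in auto)
      then show ?thesis
        using DERIV_imp_deriv \<Lambda>(2)[OF zb] by metis
    qed
    have "a * (H z * (1 + z * deriv \<Lambda> z / a)) = a * H z + z * (H z * deriv \<Lambda> z)"
      using a(2) by (simp add: field_simps)
    also have "\<dots> = a * g z"
      using H\<Lambda> ode zb by simp
    finally have "H z * (1 + z * deriv \<Lambda> z / a) = g z"
      using a(2) by simp
    then have "1 + z * deriv \<Lambda> z / a = g z / H z"
      using H(2) zb by (simp add: eq_divide_eq mult.commute)
    then have deriv_N: "deriv N z = W * g z / H z"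
      using DERIV_imp_deriv[OF dN[OF zb]] unfolding W_def by simp
    have "W powi d * W ^ k = exp ((of_int d + of_nat k) / a * \<Lambda> z)"
      unfolding W_def by (simp add: exp_power_int exp_of_nat_mult[symmetric] exp_add[symmetric]
          algebra_simps add_divide_distrib)
    also have "(of_int d + of_nat k) / a = of_nat k"
      using a by (simp add: field_simps)
    finally have W: "W powi d * W ^ k = H z ^ k"
      using \<Lambda>(2)[OF zb] by (simp add: exp_of_nat_mult)
    have "N z powi d * deriv N z ^ k = z powi d * (W powi d * W ^ k) * (g z ^ k / H z ^ k)"
      unfolding N_def W_def[symmetric] deriv_N
      by (simp add: power_int_mult_distrib power_mult_distrib power_divide mult_ac)
    also have "\<dots> = z powi d * g z ^ k"
      unfolding W using H(2) zb by simp
    finally show ?thesis .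
  qed
  ultimately show ?thesis
    unfolding normalizing_chart_def using \<rho> by (intro exI[of _ N] exI[of _ \<rho>]) auto
qed

lemma (in kth_root_presentation) normalizing_chart_nonresonant:
  assumes d: "\<nexists>n::int. n \<ge> 1 \<and> d = - n * int k"
  shows "\<exists>N. normalizing_chart k (\<lambda>w. w powi d) r \<phi> N"
proof -
  define a where "a = (of_int (d + int k) / of_nat k :: complex)"
  have a: "of_nat k * a = of_int (d + int k)"
    using k_pos unfolding a_def by simp
  have na: "of_nat j + a \<noteq> 0" for j
  proof
    assume "of_nat j + a = 0"
    then have "of_nat k * (of_nat j + a) = 0"
      by simp
    moreover have "of_nat k * (of_nat j + a) = (of_int ((int j + 1) * int k + d) :: complex)"
      using a by (simp add: algebra_simps)
    ultimately have "(of_int ((int j + 1) * int k + d) :: complex) = 0"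
      by simp
    then have "d = - (int j + 1) * int k"
      unfolding of_int_eq_0_iff by (simp add: algebra_simps)
    moreover have "int j + 1 \<ge> 1"
      by simp
    ultimately show False
      using d by blast
  qed
  have "(\<lambda>z. a * g z) holomorphic_on ball 0 r"
    using holo by (intro holomorphic_intros)
  then obtain H where H: "H holomorphic_on ball 0 r" and ode: "\<forall>z\<in>ball 0 r. a * H z + z * deriv H z = a * g z"
    by (rule Euler_ode_holomorphic_solution[OF _ na])
  have "H 0 = g 0"
    using bspec[OF ode, of 0] r_pos na[of 0] by simp
  then obtain \<rho> where \<rho>: "0 < \<rho>" "\<rho> \<le> r" and H_nonzero: "\<forall>z\<in>ball 0 \<rho>. H z \<noteq> 0"
    using holomorphic_nonzero_near_0[OF H r_pos] nonzero r_pos by auto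
  have sub: "ball (0::complex) \<rho> \<subseteq> ball 0 r"
    using \<rho>(2) by auto
  have "a \<noteq> 0"
    using na[of 0] by simp
  have "\<exists>N. normalizing_chart k (\<lambda>w. w powi d) \<rho> (\<lambda>z. z powi d * g z ^ k) N"
  proof (rule normalizing_chart_power_from_Euler[OF \<rho>(1) _ _ _ a \<open>a \<noteq> 0\<close>])
    show "H holomorphic_on ball 0 \<rho>"
      using H sub by (rule holomorphic_on_subset)
    show "\<forall>z\<in>ball 0 \<rho>. a * H z + z * deriv H z = a * g z"
      using ode sub by blast
  qed (rule H_nonzero)
  then show ?thesis
    using normalizing_chart_cong[OF _ \<rho>(2) \<phi>_eq] by blast
qed

text \<open>\<open>c N'/N = g/z\<close> with \<open>c = g 0\<close> is solved by \<open>N = z exp (Q/c)\<close>,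
  where \<open>Q' = (g z - g 0)/z\<close>.\<close>

lemma (in kth_root_presentation) normalizing_chart_minus_k:
  assumes d: "d = - int k"
  shows "\<exists>N. normalizing_chart k (\<lambda>w. (g 0 / w) ^ k) r \<phi> N"
proof -
  let ?c = "g 0"
  have c: "?c \<noteq> 0"
    using nonzero r_pos by simp
  define q where "q = (\<lambda>z. if z = 0 then deriv g 0 else (g z - g 0) / (z - 0))"
  have "q holomorphic_on ball 0 r"
    unfolding q_def by (rule pole_lemma[OF holo]) (use r_pos in auto)
  then obtain Q where Q: "\<forall>z\<in>ball 0 r. (Q has_field_derivative q z) (at z)"
    using holomorphic_primitive_on_open_convex[OF open_ball convex_ball] by blast
  define N where "N z = z * exp (Q z / ?c)" for z
  have dN: "(N has_field_derivative exp (Q z / ?c) * (1 + z * q z / ?c)) (at z)" if "z \<in> ball 0 r" for z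
    unfolding N_def[abs_def] using Q that c by (auto intro!: derivative_eq_intros simp: field_simps)
  have "N holomorphic_on ball 0 r"
    using dN by (metis holomorphic_on_open open_ball field_differentiable_def)
  moreover have "N 0 = 0"
    unfolding N_def by simp
  moreover have "deriv N 0 \<noteq> 0"
    using DERIV_imp_deriv[OF dN[of 0]] r_pos by simp
  moreover have "(?c / N z) ^ k * deriv N z ^ k = \<phi> z" if z: "z \<in> ball 0 r - {0}" for z
  proof -
    have "?c / N z * deriv N z = g z / z"
      using DERIV_imp_deriv[OF dN] z c unfolding N_def q_def by (simp add: field_simps)
    moreover have "\<phi> z = (g z / z) ^ k"
      using bspec[OF \<phi>_eq z] unfolding d by (simp add: power_int_minus power_divide field_simps)
    ultimately show ?thesis
      by (simp flip: power_mult_distrib)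
  qed
  ultimately show ?thesis
    unfolding normalizing_chart_def using r_pos by blast
qed

lemma cball_contraction_iterates:
  fixes T :: "'a::complete_space \<Rightarrow> 'a"
  assumes c: "0 \<le> c" "c < 1" and \<delta>: "0 \<le> \<delta>" and maps_to: "T ` cball w0 \<delta> \<subseteq> cball w0 \<delta>"
    and contraction: "\<And>x y. x \<in> cball w0 \<delta> \<Longrightarrow> y \<in> cball w0 \<delta> \<Longrightarrow> dist (T x) (T y) \<le> c * dist x y"
  obtains x where "x \<in> cball w0 \<delta>" "T x = x" "\<And>j. dist ((T ^^ j) w0) x \<le> c ^ j * \<delta>"
proof -
  obtain x where x: "x \<in> cball w0 \<delta>" "T x = x"
    using Banach_fix[OF _ _ c maps_to contraction] \<delta> by (auto simp: complete_eq_closed)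
  have iterate: "(T ^^ j) w0 \<in> cball w0 \<delta>" for j
    by (induction j) (use \<delta> maps_to in \<open>auto simp del: mem_cball\<close>)
  have "dist ((T ^^ j) w0) x \<le> c ^ j * \<delta>" for j
  proof (induction j)
    case 0
    then show ?case
      using x(1) by (simp add: dist_commute)
  next
    case (Suc j)
    have "dist ((T ^^ Suc j) w0) x \<le> c * dist ((T ^^ j) w0) x"
      using contraction[OF iterate x(1)] x(2) by simp
    also have "\<dots> \<le> c * (c ^ j * \<delta>)"
      using Suc c(1) by (rule mult_left_mono)
    finally show ?case
      by simp
  qed
  then show ?thesis
    using that x by blast
qed

lemma holomorphic_contraction_fixpoint:
  fixes T :: "complex \<Rightarrow> complex \<Rightarrow> complex"
  assumes S: "open S" and c: "0 \<le> c" "c < 1" and \<delta>: "0 \<le> \<delta>"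
    and maps_to: "\<And>z w. z \<in> S \<Longrightarrow> w \<in> cball w0 \<delta> \<Longrightarrow> T z w \<in> cball w0 \<delta>"
    and contraction: "\<And>z w w'. z \<in> S \<Longrightarrow> w \<in> cball w0 \<delta> \<Longrightarrow> w' \<in> cball w0 \<delta> \<Longrightarrow>
        dist (T z w) (T z w') \<le> c * dist w w'"
    and holo: "\<And>u. u holomorphic_on S \<Longrightarrow> (\<lambda>z. T z (u z)) holomorphic_on S"
  obtains f where "f holomorphic_on S" "\<forall>z\<in>S. f z \<in> cball w0 \<delta> \<and> T z (f z) = f z"
proof -
  have "\<exists>x. x \<in> cball w0 \<delta> \<and> T z x = x \<and> (\<forall>j. dist ((T z ^^ j) w0) x \<le> c ^ j * \<delta>)" if "z \<in> S" for z
    using cball_contraction_iterates[OF c \<delta>, of "T z" w0] maps_to contraction that by (metis image_subsetI)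
  then obtain f where f: "\<And>z. z \<in> S \<Longrightarrow> f z \<in> cball w0 \<delta> \<and> T z (f z) = f z"
    and err: "\<And>z j. z \<in> S \<Longrightarrow> dist ((T z ^^ j) w0) (f z) \<le> c ^ j * \<delta>"
    by metis
  define U where "U j z = (T z ^^ j) w0" for j z
  have U_holo: "U j holomorphic_on S" for j
  proof (induction j)
    case 0
    then show ?case
      unfolding U_def by simp
  next
    case (Suc j)
    then show ?case
      using holo unfolding U_def by simp
  qed
  have ulim: "uniform_limit S U f sequentially"
  proof (rule uniform_limitI)
    fix e :: real assume "0 < e"
    have "(\<lambda>j. c ^ j * \<delta>) \<longlonglongrightarrow> 0 * \<delta>"
      using c by (intro tendsto_mult LIMSEQ_power_zero tendsto_const) simp
    then have "eventually (\<lambda>j. c ^ j * \<delta> < e) sequentially"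
      using \<open>0 < e\<close> by (simp add: order_tendstoD(2))
    then show "eventually (\<lambda>j. \<forall>z\<in>S. dist (U j z) (f z) < e) sequentially"
    proof (rule eventually_mono)
      fix j assume j: "c ^ j * \<delta> < e"
      show "\<forall>z\<in>S. dist (U j z) (f z) < e"
      proof
        fix z assume "z \<in> S"
        then show "dist (U j z) (f z) < e"
          using err[of z j] j unfolding U_def by linarith
      qed
    qed
  qed
  have "f holomorphic_on S"
  proof (rule holomorphic_uniform_sequence[OF S U_holo])
    fix x assume "x \<in> S"
    then obtain d where "0 < d" "cball x d \<subseteq> S"
      using S open_contains_cball by blast
    then show "\<exists>d>0. cball x d \<subseteq> S \<and> uniform_limit (cball x d) U f sequentially"
      using uniform_limit_on_subset[OF ulim] by blast
  qed
  then show ?thesis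
    using that f by blast
qed

lemma norm_exp_minus_near_Ln:
  fixes a w :: complex
  assumes "a \<noteq> 0" "norm (w - Ln a) \<le> 1/8"
  shows "norm (exp w - a) \<le> norm a / 4"
proof -
  let ?K = "cball (Ln a) (1/8)"
  have "norm (exp w - exp (Ln a)) \<le> (2 * norm a) * norm (w - Ln a)"
  proof (rule field_differentiable_bound[of ?K exp exp])
    show "(exp has_field_derivative exp u) (at u within ?K)" for u
      by (rule has_field_derivative_at_within[OF DERIV_exp])
    show "norm (exp u) \<le> 2 * norm a" if "u \<in> ?K" for u
    proof -
      have "norm (u - Ln a) \<le> 1/2"
        using that by (simp add: dist_norm norm_minus_commute)
      then have "norm (exp (u - Ln a)) \<le> 2"
        by (rule exp_bound_half)
      moreover have "exp u = a * exp (u - Ln a)"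
        using assms(1) by (simp add: exp_diff)
      ultimately show ?thesis
        by (simp add: norm_mult mult.commute mult_left_mono)
    qed
    show "w \<in> ?K"
      using assms(2) by (simp add: dist_norm norm_minus_commute)
  qed auto
  also have "\<dots> \<le> (2 * norm a) * (1/8)"
    using assms(2) by (intro mult_left_mono) auto
  finally show ?thesis
    using assms(1) by simp
qed

lemma frozen_Newton_exp_contraction:
  fixes a b c :: complex
  assumes a: "a \<noteq> 0" and c: "norm c < norm a / 4" and b: "norm (a + c * Ln a - b) \<le> norm a / 16"
  defines "T \<equiv> \<lambda>w. w - (exp w + c * w - b) / a"
  shows "\<And>w w'. w \<in> cball (Ln a) (1/8) \<Longrightarrow> w' \<in> cball (Ln a) (1/8) \<Longrightarrow> dist (T w) (T w') \<le> 1/2 * dist w w'"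
    and "T ` cball (Ln a) (1/8) \<subseteq> cball (Ln a) (1/8)"
proof -
  let ?K = "cball (Ln a) (1/8)"
  show contraction: "dist (T w) (T w') \<le> 1/2 * dist w w'" if "w \<in> ?K" "w' \<in> ?K" for w w'
  proof -
    have "norm (T w - T w') \<le> 1/2 * norm (w - w')"
    proof (rule field_differentiable_bound[of ?K _ "\<lambda>w. 1 - (exp w + c) / a"])
      show "(T has_field_derivative 1 - (exp u + c) / a) (at u within ?K)" for u
        unfolding T_def using a by (auto intro!: derivative_eq_intros simp: field_simps)
      show "norm (1 - (exp u + c) / a) \<le> 1/2" if "u \<in> ?K" for u
      proof -
        have "norm (exp u - a) \<le> norm a / 4"
          using norm_exp_minus_near_Ln[OF a, of u] that by (simp add: dist_norm norm_minus_commute)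
        then have "norm ((a - exp u) - c) \<le> norm a / 2"
          using c norm_triangle_ineq4[of "a - exp u" c] by (simp add: norm_minus_commute)
        moreover have "1 - (exp u + c) / a = ((a - exp u) - c) / a"
          using a by (simp add: field_simps)
        ultimately show ?thesis
          using a by (simp add: norm_divide divide_le_eq)
      qed
    qed (use that in auto)
    then show ?thesis
      by (simp add: dist_norm)
  qed
  show "T ` ?K \<subseteq> ?K"
  proof
    fix v assume "v \<in> T ` ?K"
    then obtain w where w: "w \<in> ?K" "v = T w"
      by blast
    have "Ln a - T (Ln a) = (a + c * Ln a - b) / a"
      unfolding T_def using a by (simp add: field_simps)
    then have "dist (Ln a) (T (Ln a)) \<le> 1/16"
      using b a by (simp add: dist_norm norm_divide divide_le_eq)
    moreover have "dist (T (Ln a)) (T w) \<le> 1/2 * dist (Ln a) w"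
      using contraction[of "Ln a" w] w(1) by simp
    moreover have "dist (Ln a) w \<le> 1/8"
      using w(1) by simp
    ultimately show "v \<in> ?K"
      using dist_triangle[of "Ln a" "T w" "T (Ln a)"] w(2) by simp
  qed
qed

text \<open>The solution is the fixed point of the frozen Newton map
  \<open>w \<mapsto> w - (exp w + C z w - B z) / B 0\<close>, a contraction of \<open>cball (Ln (B 0)) (1/8)\<close> for small \<open>z\<close>.\<close>

lemma holomorphic_implicit_exp:
  fixes B C :: "complex \<Rightarrow> complex"
  assumes r: "0 < r" and B: "B holomorphic_on ball 0 r" and C: "C holomorphic_on ball 0 r"
    and B0: "B 0 \<noteq> 0" and C0: "C 0 = 0"
  obtains \<rho> L where "0 < \<rho>" "\<rho> \<le> r" "L holomorphic_on ball 0 \<rho>"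
    "\<forall>z\<in>ball 0 \<rho>. exp (L z) + C z * L z = B z"
proof -
  define a where "a = B 0"
  define L0 where "L0 = Ln a"
  define T where "T z w = w - (exp w + C z * w - B z) / a" for z w
  have a: "a \<noteq> 0" "norm a > 0"
    using B0 unfolding a_def by auto
  have cont: "continuous (at 0) B" "continuous (at 0) C"
    using holomorphic_on_imp_continuous_on[OF B] holomorphic_on_imp_continuous_on[OF C] r
    by (simp_all add: continuous_on_eq_continuous_at)
  have "norm a / 4 > 0" "norm a / 16 > 0"
    using a(2) by simp_all
  obtain \<rho>1 where \<rho>1: "0 < \<rho>1" "\<forall>z. dist z 0 < \<rho>1 \<longrightarrow> dist (C z) (C 0) < norm a / 4"
    using cont(2) \<open>norm a / 4 > 0\<close> unfolding continuous_at_eps_delta by blast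
  have "continuous (at 0) (\<lambda>z. a + C z * L0 - B z)"
    using cont by (intro continuous_intros)
  moreover have "a + C 0 * L0 - B 0 = 0"
    using C0 unfolding a_def by simp
  ultimately obtain \<rho>2 where \<rho>2: "0 < \<rho>2" "\<forall>z. dist z 0 < \<rho>2 \<longrightarrow> dist (a + C z * L0 - B z) 0 < norm a / 16"
    using \<open>norm a / 16 > 0\<close> unfolding continuous_at_eps_delta by metis
  define \<rho> where "\<rho> = min r (min \<rho>1 \<rho>2)"
  have \<rho>: "0 < \<rho>" "\<rho> \<le> r" "ball (0::complex) \<rho> \<subseteq> ball 0 r"
    unfolding \<rho>_def using r \<rho>1 \<rho>2 by auto
  have small_C: "norm (C z) < norm a / 4" if "z \<in> ball 0 \<rho>" for z
    using \<rho>1(2) that C0 unfolding \<rho>_def by (simp add: dist_norm)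
  have small_defect: "norm (a + C z * L0 - B z) < norm a / 16" if "z \<in> ball 0 \<rho>" for z
    using \<rho>2(2) that unfolding \<rho>_def by (simp add: dist_norm)
  note Newton = frozen_Newton_exp_contraction[OF a(1) small_C less_imp_le[OF small_defect[unfolded L0_def]]]
  have contraction: "dist (T z w) (T z w') \<le> 1/2 * dist w w'"
    if "z \<in> ball 0 \<rho>" "w \<in> cball L0 (1/8)" "w' \<in> cball L0 (1/8)" for z w w'
    using Newton(1)[OF that(1,1)] that(2,3) unfolding T_def L0_def by blast
  have maps_to: "T z w \<in> cball L0 (1/8)" if "z \<in> ball 0 \<rho>" "w \<in> cball L0 (1/8)" for z w
    using Newton(2)[OF that(1,1)] that(2) unfolding T_def L0_def by blast
  have holo: "(\<lambda>z. T z (u z)) holomorphic_on ball 0 \<rho>" if "u holomorphic_on ball 0 \<rho>" for u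
    unfolding T_def using that holomorphic_on_subset[OF B \<rho>(3)] holomorphic_on_subset[OF C \<rho>(3)]
    by (intro holomorphic_intros) auto
  obtain L where L: "L holomorphic_on ball 0 \<rho>" "\<forall>z\<in>ball 0 \<rho>. L z \<in> cball L0 (1/8) \<and> T z (L z) = L z"
    by (rule holomorphic_contraction_fixpoint[OF open_ball _ _ _ maps_to contraction holo]) (auto simp del: mem_cball)
  have "\<forall>z\<in>ball 0 \<rho>. exp (L z) + C z * L z = B z"
    using L(2) a(1) unfolding T_def by auto
  then show ?thesis
    using that \<rho>(1,2) L(1) by blast
qed

lemma resonant_Euler_ode_holomorphic_solution:
  fixes q :: "complex \<Rightarrow> complex" and a :: "nat \<Rightarrow> complex"
  assumes q: "q holomorphic_on ball 0 r"
  obtains A where "A holomorphic_on ball 0 r"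
    "\<forall>z\<in>ball 0 r. z * deriv A z - of_nat m * A z = (\<Sum>j<m. a j * z ^ j) + z ^ Suc m * q z"
proof -
  obtain Q where Q: "\<forall>z\<in>ball 0 r. (Q has_field_derivative q z) (at z)"
    using holomorphic_primitive_on_open_convex[OF open_ball convex_ball q] by blast
  define c where "c j = a j / (of_nat j - of_nat m)" for j
  define A where "A z = (\<Sum>j<m. c j * z ^ j) + z ^ m * Q z" for z
  define A' where "A' z = (\<Sum>j<m. c j * (of_nat j * z ^ (j - 1))) + (of_nat m * z ^ (m - 1) * Q z + z ^ m * q z)"
    for z
  have dA: "(A has_field_derivative A' z) (at z)" if "z \<in> ball 0 r" for z
  proof -
    have "((\<lambda>z. c j * z ^ j) has_field_derivative c j * (of_nat j * z ^ (j - 1))) (at z)" for j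
      using DERIV_power[OF DERIV_ident, of j z] by (intro DERIV_cmult) simp
    moreover have "((\<lambda>z. z ^ m * Q z) has_field_derivative of_nat m * z ^ (m - 1) * Q z + z ^ m * q z) (at z)"
      using bspec[OF Q that] by (auto intro!: derivative_eq_intros)
    ultimately show ?thesis
      unfolding A_def[abs_def] A'_def by (intro DERIV_add DERIV_sum)
  qed
  have zpow: "z * (of_nat j * z ^ (j - 1)) = of_nat j * z ^ j" for z :: complex and j
    by (cases j) auto
  have "z * A' z - of_nat m * A z = (\<Sum>j<m. a j * z ^ j) + z ^ Suc m * q z" for z
  proof -
    have "c j * (of_nat j * z ^ j) - of_nat m * (c j * z ^ j) = a j * z ^ j" if "j < m" for j
    proof -
      have "c j * (of_nat j * z ^ j) - of_nat m * (c j * z ^ j) = c j * (of_nat j - of_nat m) * z ^ j"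
        by (simp add: algebra_simps)
      also have "c j * (of_nat j - of_nat m) = a j"
        using that unfolding c_def by simp
      finally show ?thesis .
    qed
    moreover have "z * (\<Sum>j<m. c j * (of_nat j * z ^ (j - 1))) = (\<Sum>j<m. c j * (of_nat j * z ^ j))"
      unfolding sum_distrib_left by (intro sum.cong refl) (metis zpow mult.left_commute)
    ultimately have "z * (\<Sum>j<m. c j * (of_nat j * z ^ (j - 1))) - of_nat m * (\<Sum>j<m. c j * z ^ j)
        = (\<Sum>j<m. a j * z ^ j)"
      by (simp add: sum_distrib_left flip: sum_subtractf)
    moreover have "z * (of_nat m * z ^ (m - 1) * Q z + z ^ m * q z) - of_nat m * (z ^ m * Q z)
        = z ^ Suc m * q z"
      using zpow[of z m] by (auto simp: algebra_simps)
    ultimately show ?thesis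
      unfolding A_def A'_def by (simp add: algebra_simps)
  qed
  moreover have "A holomorphic_on ball 0 r"
    using dA by (metis holomorphic_on_open open_ball field_differentiable_def)
  ultimately show ?thesis
    using that dA DERIV_imp_deriv by metis
qed

lemma residue_normal_form_identity:
  fixes z E V L L' A A' g c :: complex
  assumes z: "z \<noteq> 0" and m: "m \<ge> 1" and EV: "E ^ m * V = 1"
    and implicit: "V + c * z ^ m * L = - of_nat m * A"
    and implicit': "z * V * L' + c * (of_nat m * z ^ m * L + z ^ Suc m * L') + of_nat m * (z * A') = 0"
    and ode: "z * A' - of_nat m * A = g - c * z ^ m"
  shows "((z * E) powi - int (Suc m) + c / (z * E)) * (E * (1 - z * L' / of_nat m))
    = z powi - int (Suc m) * g"
proof -
  have E: "E \<noteq> 0"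
    using EV m by (cases m) auto
  have V: "V = inverse (E ^ m)"
    using inverse_unique[OF EV] by simp
  have "of_nat m * ((V + c * z ^ m) * (1 - z * L' / of_nat m))
      = of_nat m * (V + c * z ^ m) - (z * V * L' + c * z ^ Suc m * L')"
    using m by (simp add: field_simps)
  also have "\<dots> = of_nat m * ((V + c * z ^ m * L + of_nat m * A) + c * z ^ m + (z * A' - of_nat m * A))"
    using implicit' by (simp add: algebra_simps)
  also have "\<dots> = of_nat m * g"
    using implicit ode by simp
  finally have key: "(V + c * z ^ m) * (1 - z * L' / of_nat m) = g"
    using m by simp
  let ?X = "(z * E) powi - int (Suc m) + c / (z * E)" and ?Y = "1 - z * L' / of_nat m"
  have XE: "?X * E = inverse (z ^ Suc m) * (V + c * z ^ m)"
    unfolding V power_int_minus power_int_of_nat using z E by (simp add: field_simps)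
  have "?X * (E * ?Y) = inverse (z ^ Suc m) * ((V + c * z ^ m) * ?Y)"
    by (simp only: XE flip: mult.assoc)
  also have "\<dots> = z powi - int (Suc m) * g"
    unfolding key power_int_minus power_int_of_nat ..
  finally show ?thesis .
qed

text \<open>By the Euler equation \<open>A z^(-m) + c log z\<close> is a primitive of \<open>z^(-m-1) g\<close>, and
  \<open>-N^(-m)/m + c log N\<close> is one of \<open>(N^(-m-1) + c/N) N'\<close>; for \<open>N = z exp (-L/m)\<close> the implicit
  equation says that the two agree.  The proof differentiates it without logarithms.\<close>

lemma normalizing_chart_residue_from_implicit:
  fixes A L g :: "complex \<Rightarrow> complex"
  assumes \<rho>: "0 < \<rho>" and m: "m \<ge> 1" and A: "A holomorphic_on ball 0 \<rho>" and L: "L holomorphic_on ball 0 \<rho>"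
    and ode: "\<forall>z\<in>ball 0 \<rho>. z * deriv A z - of_nat m * A z = g z - c * z ^ m"
    and implicit: "\<forall>z\<in>ball 0 \<rho>. exp (L z) + c * z ^ m * L z = - of_nat m * A z"
  shows "\<exists>N. normalizing_chart k (\<lambda>w. (w powi - int (Suc m) + c / w) ^ k) \<rho>
    (\<lambda>z. (z powi - int (Suc m) * g z) ^ k) N"
proof -
  have mz: "(of_nat m :: complex) \<noteq> 0"
    using m by simp
  have dL: "(L has_field_derivative deriv L z) (at z)" and dA: "(A has_field_derivative deriv A z) (at z)"
    if "z \<in> ball 0 \<rho>" for z
    using holomorphic_derivI[OF L open_ball that] holomorphic_derivI[OF A open_ball that] by auto
  define N where "N z = z * exp (- L z / of_nat m)" for z
  have dN: "(N has_field_derivative exp (- L z / of_nat m) * (1 - z * deriv L z / of_nat m)) (at z)"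
    if "z \<in> ball 0 \<rho>" for z
    unfolding N_def[abs_def] using mz by (auto intro!: derivative_eq_intros dL[OF that] simp: field_simps)
  have "N holomorphic_on ball 0 \<rho>"
    using dN by (metis holomorphic_on_open open_ball field_differentiable_def)
  moreover have "N 0 = 0"
    unfolding N_def by simp
  moreover have "deriv N 0 \<noteq> 0"
    using DERIV_imp_deriv[OF dN[of 0]] \<rho> by simp
  moreover have "((N z) powi - int (Suc m) + c / N z) ^ k * deriv N z ^ k = (z powi - int (Suc m) * g z) ^ k"
    if z: "z \<in> ball 0 \<rho> - {0}" for z
  proof -
    have zb: "z \<in> ball 0 \<rho>"
      using z by simp
    let ?F = "\<lambda>z. exp (L z) + c * z ^ m * L z + of_nat m * A z"
    have dF: "(?F has_field_derivative exp (L z) * deriv L z + c * (of_nat m * z ^ (m - 1) * L z + z ^ m * deriv L z)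
        + of_nat m * deriv A z) (at z)"
      by (auto intro!: derivative_eq_intros dL[OF zb] dA[OF zb] simp: algebra_simps)
    have "eventually (\<lambda>w. ?F w = 0) (nhds z)"
      using eventually_nhds_in_open[OF open_ball zb] by eventually_elim (use implicit in auto)
    then have "deriv ?F z = 0"
      using deriv_cong_ev[of ?F "\<lambda>_. 0" z z] by simp
    then have F': "exp (L z) * deriv L z + c * (of_nat m * z ^ (m - 1) * L z + z ^ m * deriv L z)
        + of_nat m * deriv A z = 0"
      using DERIV_imp_deriv[OF dF] by simp
    have zm: "z * z ^ (m - 1) = z ^ m"
      using m by (simp flip: power_Suc)
    have "z * exp (L z) * deriv L z + c * (of_nat m * z ^ m * L z + z ^ Suc m * deriv L z)
        + of_nat m * (z * deriv A z)
        = z * (exp (L z) * deriv L z + c * (of_nat m * z ^ (m - 1) * L z + z ^ m * deriv L z)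
        + of_nat m * deriv A z)"
      by (simp add: algebra_simps flip: zm)
    also have "\<dots> = 0"
      using F' by simp
    finally have "z * exp (L z) * deriv L z + c * (of_nat m * z ^ m * L z + z ^ Suc m * deriv L z)
        + of_nat m * (z * deriv A z) = 0" .
    moreover have "exp (- L z / of_nat m) ^ m * exp (L z) = 1"
      using mz by (simp add: exp_of_nat_mult[symmetric] exp_add[symmetric])
    ultimately have "(N z powi - int (Suc m) + c / N z) * deriv N z = z powi - int (Suc m) * g z"
      unfolding N_def DERIV_imp_deriv[OF dN[OF zb]]
      using residue_normal_form_identity z m bspec[OF implicit zb] bspec[OF ode zb] by blast
    then show ?thesis
      by (simp flip: power_mult_distrib)
  qed
  ultimately show ?thesis
    unfolding normalizing_chart_def using \<rho> by blast
qed

lemma (in kth_root_presentation) normalizing_chart_neg_multiple: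
  assumes d: "d = - (int (Suc m) * int k)" and m: "m \<ge> 1" and q: "q holomorphic_on ball 0 r"
    and g: "\<forall>z\<in>ball 0 r. g z = (\<Sum>j\<le>m. a j * z ^ j) + z ^ Suc m * q z"
  shows "\<exists>N. normalizing_chart k (\<lambda>w. (w powi - int (Suc m) + a m / w) ^ k) r \<phi> N"
proof -
  obtain A where A: "A holomorphic_on ball 0 r"
    and A_ode: "\<forall>z\<in>ball 0 r. z * deriv A z - of_nat m * A z = (\<Sum>j<m. a j * z ^ j) + z ^ Suc m * q z"
    by (rule resonant_Euler_ode_holomorphic_solution[OF q])
  have ode: "\<forall>z\<in>ball 0 r. z * deriv A z - of_nat m * A z = g z - a m * z ^ m"
    using A_ode g by (simp add: lessThan_Suc_atMost[symmetric])
  have "- of_nat m * A 0 = g 0"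
    using bspec[OF ode, of 0] r_pos m by simp
  then have B0: "- of_nat m * A 0 \<noteq> 0"
    using nonzero r_pos by simp
  have B: "(\<lambda>z. - of_nat m * A z) holomorphic_on ball 0 r" and C: "(\<lambda>z. a m * z ^ m) holomorphic_on ball 0 r"
    using A by (auto intro!: holomorphic_intros)
  have C0: "a m * 0 ^ m = 0"
    using m by simp
  obtain \<rho> L where \<rho>: "0 < \<rho>" "\<rho> \<le> r" and L: "L holomorphic_on ball 0 \<rho>"
    and implicit: "\<forall>z\<in>ball 0 \<rho>. exp (L z) + a m * z ^ m * L z = - of_nat m * A z"
    by (rule holomorphic_implicit_exp[OF r_pos B C B0 C0])
  have sub: "ball (0::complex) \<rho> \<subseteq> ball 0 r"
    using \<rho>(2) by auto
  have "\<exists>N. normalizing_chart k (\<lambda>w. (w powi - int (Suc m) + a m / w) ^ k) \<rho>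
      (\<lambda>z. (z powi - int (Suc m) * g z) ^ k) N"
    using normalizing_chart_residue_from_implicit[OF \<rho>(1) m holomorphic_on_subset[OF A sub] L] ode implicit sub
    by blast
  moreover have "\<forall>z\<in>ball 0 r - {0}. \<phi> z = (z powi - int (Suc m) * g z) ^ k"
  proof
    fix z :: complex assume "z \<in> ball 0 r - {0}"
    then have "\<phi> z = z powi d * g z ^ k"
      using \<phi>_eq by blast
    moreover have "z powi d = (z powi - int (Suc m)) powi int k"
      unfolding d by (simp only: power_int_mult[symmetric]) (simp add: algebra_simps)
    ultimately show "\<phi> z = (z powi - int (Suc m) * g z) ^ k"
      by (simp add: power_mult_distrib)
  qed
  ultimately show ?thesis
    using normalizing_chart_cong[OF _ \<rho>(2)] by blast
qed

text \<open>The normal forms for \<open>d = -(m+1) k\<close>; the model end has holonomy translation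
  \<open>[2\<pi>i c]\<close>.\<close>

definition residue_model :: "nat \<Rightarrow> nat \<Rightarrow> complex \<Rightarrow> complex \<Rightarrow> complex" where
  "residue_model k m c w = ((if m = 0 then 0 else w powi - int (Suc m)) + c / w) ^ k"

lemma (in kth_root_presentation) normalizing_chart_residue_model:
  assumes d: "d = - (int (Suc m) * int k)"
    and hol: "hol_transl k r \<phi> = Zk_class k (2 * of_real pi * \<i> * c)"
  shows "\<exists>N. normalizing_chart k (residue_model k m c) r \<phi> N"
proof -
  obtain a q where q: "q holomorphic_on ball 0 r"
    and g: "\<forall>z\<in>ball 0 r. g z = (\<Sum>j\<le>m. a j * z ^ j) + z ^ Suc m * q z"
    and hol_a: "hol_transl k r \<phi> = Zk_class k (2 * of_real pi * \<i> * a m)"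
    by (rule hol_transl_neg_multiple_expansion[OF d])
  obtain \<eta> where \<eta>: "\<eta> ^ k = 1" "2 * of_real pi * \<i> * c = \<eta> * (2 * of_real pi * \<i> * a m)"
    using Zk_class_eqD[OF k_pos] hol hol_a by metis
  have "\<eta> \<noteq> 0"
    using \<eta>(1) k_pos by (cases k) auto
  have c: "c = \<eta> * a m"
    using \<eta>(2) by (simp add: algebra_simps)
  interpret rotated: kth_root_presentation k d r \<phi> "\<lambda>z. \<eta> * g z"
    using k_pos r_pos holo nonzero \<phi>_eq \<eta>(1) \<open>\<eta> \<noteq> 0\<close>
    by unfold_locales (auto intro!: holomorphic_intros simp: power_mult_distrib)
  have g': "\<forall>z\<in>ball 0 r. \<eta> * g z = (\<Sum>j\<le>m. (\<eta> * a j) * z ^ j) + z ^ Suc m * (\<eta> * q z)"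
    using g by (simp add: sum_distrib_left algebra_simps)
  show ?thesis
  proof (cases "m = 0")
    case True
    have "\<eta> * g 0 = c"
      using bspec[OF g', of 0] r_pos c True by simp
    then show ?thesis
      using rotated.normalizing_chart_minus_k d True by (simp add: residue_model_def[abs_def])
  next
    case False
    have "(\<lambda>z. \<eta> * q z) holomorphic_on ball 0 r"
      using q by (intro holomorphic_intros)
    moreover have "residue_model k m c = (\<lambda>w. (w powi - int (Suc m) + (\<eta> * a m) / w) ^ k)"
      using False c by (simp add: residue_model_def[abs_def])
    ultimately show ?thesis
      using rotated.normalizing_chart_neg_multiple[OF d _ _ g'] False by simp
  qed
qed

lemma ends_equiv_if_hol_transl_eq:
  assumes k: "k \<ge> 1" and ends: "regular_end d r1 \<phi>1" "regular_end d r2 \<phi>2"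
    and hol: "hol_transl k r1 \<phi>1 = hol_transl k r2 \<phi>2"
  shows "ends_equiv k r1 \<phi>1 r2 \<phi>2"
proof -
  obtain g1 where "kth_root_presentation k d r1 \<phi>1 g1"
    using ends(1) k regular_end_iff_kth_root_presentation by blast
  then interpret end1: kth_root_presentation k d r1 \<phi>1 g1 .
  obtain g2 where "kth_root_presentation k d r2 \<phi>2 g2"
    using ends(2) k regular_end_iff_kth_root_presentation by blast
  then interpret end2: kth_root_presentation k d r2 \<phi>2 g2 .
  show ?thesis
  proof (cases "\<exists>n::int. n \<ge> 1 \<and> d = - n * int k")
    case False
    obtain N1 where "normalizing_chart k (\<lambda>w. w powi d) r1 \<phi>1 N1"
      using end1.normalizing_chart_nonresonant[OF False] by blast
    moreover obtain N2 where "normalizing_chart k (\<lambda>w. w powi d) r2 \<phi>2 N2"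
      using end2.normalizing_chart_nonresonant[OF False] by blast
    ultimately show ?thesis
      by (rule ends_equiv_if_normalizing_charts)
  next
    case True
    then obtain n :: int where "n \<ge> 1" "d = - n * int k"
      by blast
    then obtain m where d: "d = - (int (Suc m) * int k)"
      by (intro that[of "nat (n - 1)"]) simp
    obtain a q where "q holomorphic_on ball 0 r1" "\<forall>z\<in>ball 0 r1. g1 z = (\<Sum>j\<le>m. a j * z ^ j) + z ^ Suc m * q z"
      and hol1: "hol_transl k r1 \<phi>1 = Zk_class k (2 * of_real pi * \<i> * a m)"
      by (rule end1.hol_transl_neg_multiple_expansion[OF d])
    obtain N1 where "normalizing_chart k (residue_model k m (a m)) r1 \<phi>1 N1"
      using end1.normalizing_chart_residue_model[OF d hol1] by blast
    moreover have "hol_transl k r2 \<phi>2 = Zk_class k (2 * of_real pi * \<i> * a m)"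
      using hol hol1 by simp
    then obtain N2 where "normalizing_chart k (residue_model k m (a m)) r2 \<phi>2 N2"
      using end2.normalizing_chart_residue_model[OF d] by blast
    ultimately show ?thesis
      by (rule ends_equiv_if_normalizing_charts)
  qed
qed

theorem proposition5p1:
  fixes k :: nat
  assumes "k \<ge> 1"
  shows "(\<forall>d r \<phi>. regular_end d r \<phi> \<longrightarrow>
            (hol_transl k r \<phi> \<noteq> Zk_class k 0 \<longrightarrow> (\<exists>n::int. n \<ge> 1 \<and> d = - n * int k)) \<and>
            (d = - int k \<longrightarrow> hol_transl k r \<phi> \<noteq> Zk_class k 0))
       \<and> (\<forall>d \<tau>. \<tau> \<in> range (Zk_class k) \<and>
            (\<tau> \<noteq> Zk_class k 0 \<longrightarrow> (\<exists>n::int. n \<ge> 1 \<and> d = - n * int k)) \<and>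
            (d = - int k \<longrightarrow> \<tau> \<noteq> Zk_class k 0) \<longrightarrow>
            (\<exists>r \<phi>. regular_end d r \<phi> \<and> hol_transl k r \<phi> = \<tau>) \<and>
            (\<forall>r1 \<phi>1 r2 \<phi>2. regular_end d r1 \<phi>1 \<and> hol_transl k r1 \<phi>1 = \<tau> \<and>
                 regular_end d r2 \<phi>2 \<and> hol_transl k r2 \<phi>2 = \<tau> \<longrightarrow>
                 ends_equiv k r1 \<phi>1 r2 \<phi>2))"
proof (intro conjI allI impI)
  fix d r \<phi> assume "regular_end d r \<phi>"
  show "\<exists>n::int. n \<ge> 1 \<and> d = - n * int k" if "hol_transl k r \<phi> \<noteq> Zk_class k 0"
    using hol_transl_regular_end_eq_0[OF \<open>regular_end d r \<phi>\<close> assms] that by blast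
  show "hol_transl k r \<phi> \<noteq> Zk_class k 0" if "d = - int k"
    using hol_transl_regular_end_minus_k[OF _ assms] \<open>regular_end d r \<phi>\<close> that by blast
next
  fix d and \<tau> :: "complex set"
  assume \<tau>: "\<tau> \<in> range (Zk_class k) \<and>
    (\<tau> \<noteq> Zk_class k 0 \<longrightarrow> (\<exists>n::int. n \<ge> 1 \<and> d = - n * int k)) \<and>
    (d = - int k \<longrightarrow> \<tau> \<noteq> Zk_class k 0)"
  then obtain b where "\<tau> = Zk_class k b"
    by blast
  then show "\<exists>r \<phi>. regular_end d r \<phi> \<and> hol_transl k r \<phi> = \<tau>"
    using exists_end_with_hol_transl[OF assms] \<tau> by blast
  fix r1 \<phi>1 r2 \<phi>2
  assume "regular_end d r1 \<phi>1 \<and> hol_transl k r1 \<phi>1 = \<tau> \<and> regular_end d r2 \<phi>2 \<and> hol_transl k r2 \<phi>2 = \<tau>"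
  then show "ends_equiv k r1 \<phi>1 r2 \<phi>2"
    using ends_equiv_if_hol_transl_eq[OF assms] by metis
qed

end
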